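(* Let $\mathfrak g$ be a finite-dimensional Lie algebra over a field $\mathbb K$ of characteristic zero and $V$ a non-negative bounded dg $\mathfrak g$-module. The assignment $\alpha=\{\alpha_k\}\mapsto c(\alpha)=\sum_k c_k(\alpha)$ gives a one-to-one correspondence between dg Loday–Pirashvili module structures $(V,\alpha)$ over $\mathfrak g$ and degree $0$ cocycles of the Chevalley–Eilenberg total complex $\Omega_{\mathfrak g}(\operatorname{Hom}(V,\mathfrak g))$. Moreover, there is a one-to-one correspondence between dg Loday–Pirashvili classes $(V,[\alpha])$ over $\mathfrak g$ and degree $0$ cohomology classes of the total complex $\Omega_{\mathfrak g}(\operatorname{Hom}(V,\mathfrak g))$.
   Context: A dg $\mathfrak g$-module is a bounded cochain complex $(V^\bullet,d^V)$ of $\mathfrak g$-modules with equivariant differentials; non-negative means $V^i=0$ for $i<0$. For a dg $\mathfrak g$-module $W$, $\Omega_{\mathfrak g}(W)=\wedge^\bullet\mathfrak g^\vee\otimes W$ (degree of $\wedge^p\mathfrak g^\vee\otimes W^q$ is $p+q$) with total differential $d^W_{\mathrm{tot}}=d^W_{\mathrm{CE}}+d^W$, $d^W_{\mathrm{CE}}$ the Chevalley–Eilenberg differential and $d^W(\omega\otimes w)=(-1)^p\omega\otimes d^Ww$. A dg Loday–Pirashvili module is a pair $(V,\alpha)$ where $\alpha\colon\Omega_{\mathfrak g}(V)\to\Omega_{\mathfrak g}(\mathfrak g)$ is a degree $0$ $\Omega_{\mathfrak g}$-linear map with $\alpha\circ d^V_{\mathrm{tot}}=d^{\mathfrak g}_{\mathrm{CE}}\circ\alpha$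 ($\mathfrak g$ in degree $0$ with adjoint action); it is generated by maps $\alpha_k\colon V^k\to\wedge^k\mathfrak g^\vee\otimes\mathfrak g$. Two such $\alpha,\alpha'$ are homotopic if $\alpha'-\alpha=d^{\mathfrak g}_{\mathrm{CE}}\circ h+h\circ d^V_{\mathrm{tot}}$ for some degree $-1$ $\Omega_{\mathfrak g}$-linear $h\colon\Omega_{\mathfrak g}(V)\to\Omega_{\mathfrak g}(\mathfrak g)$; the dg Loday–Pirashvili class $(V,[\alpha])$ is $V$ with the homotopy class of $\alpha$. $\operatorname{Hom}(V,\mathfrak g)$ is the dg $\mathfrak g$-module with $\operatorname{Hom}(V^k,\mathfrak g)$ in degree $-k$, differential given by precomposition with $d^V$ (with the standard Koszul sign) and action $(x\cdot\phi)(v)=[x,\phi(v)]-\phi(x\triangleright v)$. The cochain $c_k(\alpha)\in\wedge^k\mathfrak g^\vee\otimes\operatorname{Hom}(V^k,\mathfrak g)$ is the element equivalent to $\alpha_k$, so $c(\alpha)$ has degree $0$. *)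

theory Defs
  imports Complex_Main "HOL-Library.Function_Algebras"
begin

definition isgn :: "int \<Rightarrow> 'a::ab_group_add \<Rightarrow> 'a" where
  "isgn n a = (if even n then a else - a)"

definition del :: "nat \<Rightarrow> 'a list \<Rightarrow> 'a list" where
  "del i xs = take i xs @ drop (Suc i) xs"

definition lin_on :: "('k \<Rightarrow> 'a::ab_group_add \<Rightarrow> 'a) \<Rightarrow> ('k \<Rightarrow> 'b::ab_group_add \<Rightarrow> 'b)
    \<Rightarrow> 'a set \<Rightarrow> ('a \<Rightarrow> 'b) \<Rightarrow> bool" where
  "lin_on sa sb S f \<longleftrightarrow> (\<forall>x\<in>S. \<forall>y\<in>S. f (x + y) = f x + f y) \<and> (\<forall>c. \<forall>x\<in>S. f (sa c x) = sb c (f x))"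

definition lie_algebra :: "('k::field \<Rightarrow> 'g::ab_group_add \<Rightarrow> 'g) \<Rightarrow> ('g \<Rightarrow> 'g \<Rightarrow> 'g) \<Rightarrow> bool" where
  "lie_algebra sg br \<longleftrightarrow> vector_space sg \<and>
     (\<forall>x y z. br (x + y) z = br x z + br y z) \<and>
     (\<forall>x y z. br x (y + z) = br x y + br x z) \<and>
     (\<forall>c x y. br (sg c x) y = sg c (br x y)) \<and>
     (\<forall>c x y. br x (sg c y) = sg c (br x y)) \<and>
     (\<forall>x. br x x = 0) \<and>
     (\<forall>x y z. br x (br y z) + br y (br z x) + br z (br x y) = 0)"

definition finite_dim :: "('k::field \<Rightarrow> 'g::ab_group_add \<Rightarrow> 'g) \<Rightarrow> bool" where
  "finite_dim sg \<longleftrightarrow> (\<exists>B. finite B \<and> module.span sg B = UNIV)"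

text \<open>A (bounded) dg g-module: components W^n (subspaces of an ambient space),
  action and differential given degreewise.\<close>
definition dg_module :: "('k::field \<Rightarrow> 'g::ab_group_add \<Rightarrow> 'g) \<Rightarrow> ('g \<Rightarrow> 'g \<Rightarrow> 'g)
    \<Rightarrow> ('k \<Rightarrow> 'w::ab_group_add \<Rightarrow> 'w) \<Rightarrow> (int \<Rightarrow> 'w set)
    \<Rightarrow> (int \<Rightarrow> 'g \<Rightarrow> 'w \<Rightarrow> 'w) \<Rightarrow> (int \<Rightarrow> 'w \<Rightarrow> 'w) \<Rightarrow> bool" where
  "dg_module sg br sw Wc act d \<longleftrightarrow> vector_space sw \<and>
     (\<forall>n. module.subspace sw (Wc n)) \<and>
     (\<forall>n x. \<forall>v\<in>Wc n. act n x v \<in> Wc n) \<and>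
     (\<forall>n x. lin_on sw sw (Wc n) (act n x)) \<and>
     (\<forall>n x y. \<forall>v\<in>Wc n. act n (x + y) v = act n x v + act n y v) \<and>
     (\<forall>n c x. \<forall>v\<in>Wc n. act n (sg c x) v = sw c (act n x v)) \<and>
     (\<forall>n x y. \<forall>v\<in>Wc n. act n (br x y) v = act n x (act n y v) - act n y (act n x v)) \<and>
     (\<forall>n. \<forall>v\<in>Wc n. d n v \<in> Wc (n + 1)) \<and>
     (\<forall>n. lin_on sw sw (Wc n) (d n)) \<and>
     (\<forall>n. \<forall>v\<in>Wc n. d (n + 1) (d n v) = 0) \<and>
     (\<forall>n x. \<forall>v\<in>Wc n. d n (act n x v) = act (n + 1) x (d n v)) \<and>
     finite {n. Wc n \<noteq> {0}}"

definition nonneg :: "(int \<Rightarrow> 'w::zero set) \<Rightarrow> bool" where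
  "nonneg Wc \<longleftrightarrow> (\<forall>n<0. Wc n = {0})"

section \<open>Alternating forms: \<wedge>^p g^\<or> \<otimes> S realised as alternating p-linear maps g^p \<rightarrow> S\<close>

definition alt_forms :: "('k \<Rightarrow> 'g::ab_group_add \<Rightarrow> 'g) \<Rightarrow> ('k \<Rightarrow> 'w::ab_group_add \<Rightarrow> 'w) \<Rightarrow> nat
    \<Rightarrow> 'w set \<Rightarrow> ('g list \<Rightarrow> 'w) set" where
  "alt_forms sg sw p S = {f.
     (\<forall>xs. length xs = p \<longrightarrow> f xs \<in> S) \<and>
     (\<forall>xs. length xs \<noteq> p \<longrightarrow> f xs = 0) \<and>
     (\<forall>xs i y z. length xs = p \<and> i < p \<longrightarrow> f (xs[i := y + z]) = f (xs[i := y]) + f (xs[i := z])) \<and>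
     (\<forall>xs i c y. length xs = p \<and> i < p \<longrightarrow> f (xs[i := sg c y]) = sw c (f (xs[i := y]))) \<and>
     (\<forall>xs i j. length xs = p \<and> i < j \<and> j < p \<and> xs ! i = xs ! j \<longrightarrow> f xs = 0)}"

definition ce_diff :: "('g::ab_group_add \<Rightarrow> 'g \<Rightarrow> 'g) \<Rightarrow> ('g \<Rightarrow> 'w \<Rightarrow> 'w) \<Rightarrow> ('g list \<Rightarrow> 'w) \<Rightarrow> 'g list \<Rightarrow> 'w::ab_group_add" where
  "ce_diff br act f xs =
     (\<Sum>i<length xs. isgn (int i) (act (xs ! i) (f (del i xs)))) +
     (\<Sum>j<length xs. \<Sum>i<j. isgn (int (i + j)) (f (br (xs ! i) (xs ! j) # del i (del j xs))))"

definition shuffle_ext :: "nat \<Rightarrow> nat \<Rightarrow> ('g::ab_group_add list \<Rightarrow> 'a) \<Rightarrow> ('a \<Rightarrow> 'g list \<Rightarrow> 'b::ab_group_add) \<Rightarrow> 'g list \<Rightarrow> 'b" where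
  "shuffle_ext p q phi F xs =
     (if length xs = p + q then
        (\<Sum>I\<in>{I. I \<subseteq> {..<p + q} \<and> card I = p}.
           isgn (int ((\<Sum>i\<in>I. i) + p * (p - 1) div 2)) (F (phi (nths xs I)) (nths xs ({..<p + q} - I))))
      else 0)"

text \<open>Degree n elements of \<Omega>_g(W): families indexed by the W-degree q of (n-q)-forms with values in W^q.\<close>
definition omega :: "('k \<Rightarrow> 'g::ab_group_add \<Rightarrow> 'g) \<Rightarrow> ('k \<Rightarrow> 'w::ab_group_add \<Rightarrow> 'w) \<Rightarrow> (int \<Rightarrow> 'w set) \<Rightarrow> int
    \<Rightarrow> (int \<Rightarrow> 'g list \<Rightarrow> 'w) set" where
  "omega sg sw Wc n = {f. \<forall>q. (q \<le> n \<longrightarrow> f q \<in> alt_forms sg sw (nat (n - q)) (Wc q)) \<and>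
                            (n < q \<longrightarrow> f q = (\<lambda>_. 0))}"

text \<open>Total differential d_CE + d^W on a degree n element, with d^W(\<omega>\<otimes>w) = (-1)^p \<omega>\<otimes>dw.\<close>
definition dtot :: "('g::ab_group_add \<Rightarrow> 'g \<Rightarrow> 'g) \<Rightarrow> (int \<Rightarrow> 'g \<Rightarrow> 'w \<Rightarrow> 'w) \<Rightarrow> (int \<Rightarrow> 'w \<Rightarrow> 'w) \<Rightarrow> int
    \<Rightarrow> (int \<Rightarrow> 'g list \<Rightarrow> 'w::ab_group_add) \<Rightarrow> int \<Rightarrow> 'g list \<Rightarrow> 'w" where
  "dtot br act d n f = (\<lambda>q. if q \<le> n + 1 then
       (\<lambda>xs. ce_diff br (act q) (f q) xs + isgn (n + 1 - q) (d (q - 1) (f (q - 1) xs)))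
     else (\<lambda>_. 0))"

text \<open>Generators of a degree 0 \<Omega>_g-linear map \<Omega>_g(V) \<rightarrow> \<Omega>_g(g): alpha k : V^k \<rightarrow> \<wedge>^k g^\<or> \<otimes> g.\<close>
definition deg0_gens :: "('k \<Rightarrow> 'g \<Rightarrow> 'g) \<Rightarrow> ('k \<Rightarrow> 'v::ab_group_add \<Rightarrow> 'v) \<Rightarrow> (int \<Rightarrow> 'v set)
    \<Rightarrow> (int \<Rightarrow> 'v \<Rightarrow> 'g list \<Rightarrow> 'g::ab_group_add) set" where
  "deg0_gens sg sv Vc = {\<alpha>. \<forall>k.
     (\<forall>v. v \<notin> Vc k \<longrightarrow> \<alpha> k v = (\<lambda>_. 0)) \<and>
     (\<forall>v\<in>Vc k. \<alpha> k v \<in> alt_forms sg sg (nat k) UNIV) \<and>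
     lin_on sv (\<lambda>c F xs. sg c (F xs)) (Vc k) (\<alpha> k)}"

text \<open>Generators of a degree -1 \<Omega>_g-linear map: h k : V^k \<rightarrow> \<wedge>^(k-1) g^\<or> \<otimes> g (zero for k \<le> 0).\<close>
definition degm1_gens :: "('k \<Rightarrow> 'g \<Rightarrow> 'g) \<Rightarrow> ('k \<Rightarrow> 'v::ab_group_add \<Rightarrow> 'v) \<Rightarrow> (int \<Rightarrow> 'v set)
    \<Rightarrow> (int \<Rightarrow> 'v \<Rightarrow> 'g list \<Rightarrow> 'g::ab_group_add) set" where
  "degm1_gens sg sv Vc = {h. \<forall>k.
     (\<forall>v. v \<notin> Vc k \<longrightarrow> h k v = (\<lambda>_. 0)) \<and>
     (k \<le> 0 \<longrightarrow> (\<forall>v. h k v = (\<lambda>_. 0))) \<and>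
     (\<forall>v\<in>Vc k. h k v \<in> alt_forms sg sg (nat (k - 1)) UNIV) \<and>
     lin_on sv (\<lambda>c F xs. sg c (F xs)) (Vc k) (h k)}"

text \<open>Omega-linear extension of degree 0: \<omega>\<otimes>v \<mapsto> \<omega> \<wedge> alpha(v), applied to a degree n element.\<close>
definition ext0 :: "(int \<Rightarrow> 'v \<Rightarrow> 'g list \<Rightarrow> 'g::ab_group_add) \<Rightarrow> int \<Rightarrow> (int \<Rightarrow> 'g list \<Rightarrow> 'v) \<Rightarrow> 'g list \<Rightarrow> 'g" where
  "ext0 \<alpha> n f = (\<lambda>xs. \<Sum>q\<in>{0..n}. shuffle_ext (nat (n - q)) (nat q) (f q) (\<alpha> q) xs)"

text \<open>Omega-linear extension of degree -1 (Koszul sign): \<omega>\<otimes>v \<mapsto> (-1)^|\<omega>| \<omega> \<wedge> h(v).\<close>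
definition ext1 :: "(int \<Rightarrow> 'v \<Rightarrow> 'g list \<Rightarrow> 'g::ab_group_add) \<Rightarrow> int \<Rightarrow> (int \<Rightarrow> 'g list \<Rightarrow> 'v) \<Rightarrow> 'g list \<Rightarrow> 'g" where
  "ext1 h n f = (\<lambda>xs. \<Sum>q\<in>{0..n}. isgn (n - q) (shuffle_ext (nat (n - q)) (nat q - 1) (f q) (h q) xs))"

definition LP_structures :: "('k \<Rightarrow> 'g \<Rightarrow> 'g) \<Rightarrow> ('g \<Rightarrow> 'g \<Rightarrow> 'g::ab_group_add) \<Rightarrow> ('k \<Rightarrow> 'v::ab_group_add \<Rightarrow> 'v)
    \<Rightarrow> (int \<Rightarrow> 'v set) \<Rightarrow> (int \<Rightarrow> 'g \<Rightarrow> 'v \<Rightarrow> 'v) \<Rightarrow> (int \<Rightarrow> 'v \<Rightarrow> 'v)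
    \<Rightarrow> (int \<Rightarrow> 'v \<Rightarrow> 'g list \<Rightarrow> 'g) set" where
  "LP_structures sg br sv Vc actV dV = {\<alpha> \<in> deg0_gens sg sv Vc.
     \<forall>n. \<forall>f\<in>omega sg sv Vc n. ext0 \<alpha> (n + 1) (dtot br actV dV n f) = ce_diff br br (ext0 \<alpha> n f)}"

definition LP_homotopic :: "('k \<Rightarrow> 'g \<Rightarrow> 'g) \<Rightarrow> ('g \<Rightarrow> 'g \<Rightarrow> 'g::ab_group_add) \<Rightarrow> ('k \<Rightarrow> 'v::ab_group_add \<Rightarrow> 'v)
    \<Rightarrow> (int \<Rightarrow> 'v set) \<Rightarrow> (int \<Rightarrow> 'g \<Rightarrow> 'v \<Rightarrow> 'v) \<Rightarrow> (int \<Rightarrow> 'v \<Rightarrow> 'v)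
    \<Rightarrow> (int \<Rightarrow> 'v \<Rightarrow> 'g list \<Rightarrow> 'g) \<Rightarrow> (int \<Rightarrow> 'v \<Rightarrow> 'g list \<Rightarrow> 'g) \<Rightarrow> bool" where
  "LP_homotopic sg br sv Vc actV dV \<alpha> \<alpha>' \<longleftrightarrow> (\<exists>h\<in>degm1_gens sg sv Vc.
     \<forall>n. \<forall>f\<in>omega sg sv Vc n. \<forall>xs.
        ext0 \<alpha>' n f xs - ext0 \<alpha> n f xs =
        ce_diff br br (ext1 h n f) xs + ext1 h (n + 1) (dtot br actV dV n f) xs)"

text \<open>Hom(V^k, g) sits in degree -k.\<close>
definition Hom_c :: "('k \<Rightarrow> 'g \<Rightarrow> 'g) \<Rightarrow> ('k \<Rightarrow> 'v::ab_group_add \<Rightarrow> 'v) \<Rightarrow> (int \<Rightarrow> 'v set)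
    \<Rightarrow> int \<Rightarrow> ('v \<Rightarrow> 'g::ab_group_add) set" where
  "Hom_c sg sv Vc n = {\<phi>. lin_on sv sg (Vc (- n)) \<phi> \<and> (\<forall>v. v \<notin> Vc (- n) \<longrightarrow> \<phi> v = 0)}"

definition Hom_scale :: "('k \<Rightarrow> 'g::ab_group_add \<Rightarrow> 'g) \<Rightarrow> 'k \<Rightarrow> ('v \<Rightarrow> 'g) \<Rightarrow> 'v \<Rightarrow> 'g" where
  "Hom_scale sg c \<phi> = (\<lambda>v. sg c (\<phi> v))"

definition Hom_act :: "('g \<Rightarrow> 'g \<Rightarrow> 'g::ab_group_add) \<Rightarrow> (int \<Rightarrow> 'v set) \<Rightarrow> (int \<Rightarrow> 'g \<Rightarrow> 'v \<Rightarrow> 'v)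
    \<Rightarrow> int \<Rightarrow> 'g \<Rightarrow> ('v \<Rightarrow> 'g) \<Rightarrow> 'v \<Rightarrow> 'g" where
  "Hom_act br Vc actV n x \<phi> = (\<lambda>v. if v \<in> Vc (- n) then br x (\<phi> v) - \<phi> (actV (- n) x v) else 0)"

text \<open>Koszul sign: d\<phi> = d_g \<circ> \<phi> - (-1)^|\<phi>| \<phi> \<circ> d_V, with d_g = 0 and |\<phi>| = n.\<close>
definition Hom_d :: "(int \<Rightarrow> 'v set) \<Rightarrow> (int \<Rightarrow> 'v \<Rightarrow> 'v) \<Rightarrow> int \<Rightarrow> ('v \<Rightarrow> 'g::ab_group_add) \<Rightarrow> 'v \<Rightarrow> 'g" where
  "Hom_d Vc dV n \<phi> = (\<lambda>v. if v \<in> Vc (- n - 1) then isgn (n + 1) (\<phi> (dV (- n - 1) v)) else 0)"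

definition cocycles0 :: "('k \<Rightarrow> 'g \<Rightarrow> 'g) \<Rightarrow> ('g \<Rightarrow> 'g \<Rightarrow> 'g::ab_group_add) \<Rightarrow> ('k \<Rightarrow> 'v::ab_group_add \<Rightarrow> 'v)
    \<Rightarrow> (int \<Rightarrow> 'v set) \<Rightarrow> (int \<Rightarrow> 'g \<Rightarrow> 'v \<Rightarrow> 'v) \<Rightarrow> (int \<Rightarrow> 'v \<Rightarrow> 'v)
    \<Rightarrow> (int \<Rightarrow> 'g list \<Rightarrow> 'v \<Rightarrow> 'g) set" where
  "cocycles0 sg br sv Vc actV dV = {c \<in> omega sg (Hom_scale sg) (Hom_c sg sv Vc) 0.
     dtot br (Hom_act br Vc actV) (Hom_d Vc dV) 0 c = (\<lambda>_ _. 0)}"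

definition coboundaries0 :: "('k \<Rightarrow> 'g \<Rightarrow> 'g) \<Rightarrow> ('g \<Rightarrow> 'g \<Rightarrow> 'g::ab_group_add) \<Rightarrow> ('k \<Rightarrow> 'v::ab_group_add \<Rightarrow> 'v)
    \<Rightarrow> (int \<Rightarrow> 'v set) \<Rightarrow> (int \<Rightarrow> 'g \<Rightarrow> 'v \<Rightarrow> 'v) \<Rightarrow> (int \<Rightarrow> 'v \<Rightarrow> 'v)
    \<Rightarrow> (int \<Rightarrow> 'g list \<Rightarrow> 'v \<Rightarrow> 'g) set" where
  "coboundaries0 sg br sv Vc actV dV =
     dtot br (Hom_act br Vc actV) (Hom_d Vc dV) (-1) ` omega sg (Hom_scale sg) (Hom_c sg sv Vc) (-1)"

definition cmap :: "(int \<Rightarrow> 'v \<Rightarrow> 'g list \<Rightarrow> 'g::zero) \<Rightarrow> int \<Rightarrow> 'g list \<Rightarrow> 'v \<Rightarrow> 'g" where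
  "cmap \<alpha> = (\<lambda>q xs v. if q \<le> 0 then \<alpha> (- q) v xs else 0)"

end

theory Submission
  imports Defs
begin

text \<open>A degree \<open>0\<close> map \<open>\<alpha>\<close> is determined by its generators \<open>\<alpha>\<^sub>k : V\<^sup>k \<rightarrow> \<wedge>\<^sup>k \<gg>\<^sup>\<or> \<otimes> \<gg>\<close>, and
  \<open>c(\<alpha>)\<close> is the same data read as a cochain. By the Leibniz rule for the shuffle product,
  \<open>\<alpha> \<circ> d\<^sub>t\<^sub>o\<^sub>t - d\<^sub>C\<^sub>E \<circ> \<alpha>\<close> sends \<open>\<omega> \<otimes> v\<close> to \<open>\<plusminus>\<omega> \<wedge> D\<^sub>k(v)\<close> with
  \<open>D\<^sub>k = \<alpha>\<^sub>k\<^sub>+\<^sub>1 \<circ> d\<^sup>V - d\<^sub>C\<^sub>E \<alpha>\<^sub>k\<close>; testing against the elements \<open>1 \<otimes> v\<close> shows that \<open>\<alpha>\<close> is a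
  Loday--Pirashvili structure iff all \<open>D\<^sub>k\<close> vanish, and these \<open>D\<^sub>k\<close> are, up to sign, the components
  of \<open>d\<^sub>t\<^sub>o\<^sub>t c(\<alpha>)\<close>. Likewise \<open>d\<^sub>C\<^sub>E \<circ> h + h \<circ> d\<^sub>t\<^sub>o\<^sub>t\<close> is the extension of the components
  \<open>d\<^sub>C\<^sub>E h\<^sub>k + h\<^sub>k\<^sub>+\<^sub>1 \<circ> d\<^sup>V\<close>, which are those of \<open>d\<^sub>t\<^sub>o\<^sub>t\<close> of the degree \<open>-1\<close> cochain built
  from \<open>h\<close>; so homotopies from \<open>\<alpha>\<close> to \<open>\<alpha>'\<close> are primitives of \<open>c(\<alpha>') - c(\<alpha>)\<close>.\<close>

lemma sum_fun_apply: "(\<Sum>i\<in>A. f i) v = (\<Sum>i\<in>A. f i v)"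
  by (induct A rule: infinite_finite_induct) auto

lemma sum_int_drop_top:
  fixes n :: int
  assumes "g (n + 1) = 0"
  shows "(\<Sum>q\<in>{0..n + 1}. g q) = (\<Sum>q\<in>{0..n}. g q)"
proof (rule sum.mono_neutral_right)
  show "\<forall>i\<in>{0..n + 1} - {0..n}. g i = 0"
  proof
    fix i assume "i \<in> {0..n + 1} - {0..n}"
    then have "i = n + 1" by auto
    then show "g i = 0" using assms by simp
  qed
qed auto

lemma sum_int_shift:
  fixes n :: int
  assumes "g 0 = 0"
  shows "(\<Sum>q\<in>{0..n + 1}. g q) = (\<Sum>q\<in>{0..n}. g (q + 1))"
proof -
  have "(\<Sum>q\<in>{0..n + 1}. g q) = (\<Sum>q\<in>{1..n + 1}. g q)"
  proof (rule sum.mono_neutral_right)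
    show "\<forall>i\<in>{0..n + 1} - {1..n + 1}. g i = 0"
    proof
      fix i assume "i \<in> {0..n + 1} - {1..n + 1}"
      then have "i = 0" by auto
      then show "g i = 0" using assms by simp
    qed
  qed auto
  also have "{1..n + 1} = (\<lambda>q. q + 1) ` {0..n}"
    by (auto simp: image_iff intro: bexI[where x = "_ - 1"])
  also have "(\<Sum>q\<in>(\<lambda>q. q + 1) ` {0..n}. g q) = (\<Sum>q\<in>{0..n}. g (q + 1))"
    by (rule sum.reindex_cong[where l = "\<lambda>q. q + 1"]) (auto simp: inj_on_def)
  finally show ?thesis .
qed

lemma isgn_0 [simp]: "isgn 0 a = a"
  by (simp add: isgn_def)

lemma isgn_zero [simp]: "isgn n 0 = 0"
  by (simp add: isgn_def)

lemma isgn_add: "isgn n (a + b) = isgn n a + isgn n b"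
  by (simp add: isgn_def)

lemma isgn_diff: "isgn n (a - b) = isgn n a - isgn n b"
  by (simp add: isgn_def)

lemma isgn_minus: "isgn n (- a) = - isgn n a"
  by (simp add: isgn_def)

lemma isgn_isgn: "isgn m (isgn n a) = isgn (m + n) a"
  by (simp add: isgn_def)

lemma isgn_isgn_same [simp]: "isgn n (isgn n a) = a"
  by (simp add: isgn_def)

lemma isgn_1_plus [simp]: "isgn (1 + n) a = - isgn n a"
  by (simp add: isgn_def)

lemma isgn_Suc: "isgn (int (Suc i)) a = - isgn (int i) a"
  by (simp add: isgn_def)

lemma isgn_sum: "isgn n (\<Sum>i\<in>A. f i) = (\<Sum>i\<in>A. isgn n (f i))"
  by (simp add: isgn_def sum_negf)

lemma isgn_fun_apply: "isgn n f v = isgn n (f v)"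
  by (simp add: isgn_def)

lemma del_0_Cons [simp]: "del 0 (x # xs) = xs"
  by (simp add: del_def)

lemma del_Suc_Cons [simp]: "del (Suc i) (x # xs) = x # del i xs"
  by (simp add: del_def)

lemma length_del [simp]: "length (del i xs) = (if i < length xs then length xs - 1 else length xs)"
  by (simp add: del_def)

section \<open>Contraction, Lie derivative and Cartan's formula\<close>

definition contract :: "'g \<Rightarrow> ('g list \<Rightarrow> 'a) \<Rightarrow> 'g list \<Rightarrow> 'a" where
  "contract x \<psi> = (\<lambda>ys. \<psi> (x # ys))"

definition skew :: "('g list \<Rightarrow> 'a::ab_group_add) \<Rightarrow> bool" where
  "skew \<psi> \<longleftrightarrow> (\<forall>as x y bs. \<psi> (as @ x # y # bs) = - \<psi> (as @ y # x # bs))"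

definition lie_deriv :: "('g \<Rightarrow> 'g \<Rightarrow> 'g) \<Rightarrow> ('g \<Rightarrow> 'a \<Rightarrow> 'a) \<Rightarrow> 'g \<Rightarrow> ('g list \<Rightarrow> 'a::ab_group_add)
    \<Rightarrow> 'g list \<Rightarrow> 'a" where
  "lie_deriv br act x \<psi> ys = act x (\<psi> ys) - (\<Sum>i<length ys. \<psi> (ys[i := br x (ys ! i)]))"

lemma skew_contract: "skew \<psi> \<Longrightarrow> skew (contract x \<psi>)"
  unfolding skew_def contract_def by (metis append_Cons)

lemma skew_swap: "skew \<psi> \<Longrightarrow> \<psi> (x # y # bs) = - \<psi> (y # x # bs)"
  unfolding skew_def by (metis append_Nil)

lemma skew_flip:
  assumes "\<forall>v. skew (G v)"
  shows "skew (\<lambda>zs v. G v zs)"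
  unfolding skew_def
proof (intro allI ext)
  fix as x y bs v
  show "G v (as @ x # y # bs) = (- (\<lambda>v. G v (as @ y # x # bs))) v"
    using assms unfolding uminus_apply skew_def by blast
qed

lemma skew_Cons_del:
  assumes "skew \<psi>" "j < length ys"
  shows "\<psi> (z # del j ys) = isgn (int j) (\<psi> (ys[j := z]))"
  using assms
proof (induct j arbitrary: \<psi> ys)
  case 0
  then show ?case by (cases ys) auto
next
  case (Suc j)
  then obtain y ys' where ys: "ys = y # ys'" and j: "j < length ys'" by (cases ys) auto
  have "\<psi> (z # del (Suc j) ys) = - contract y \<psi> (z # del j ys')"
    using skew_swap[OF Suc.prems(1), of z y "del j ys'"] ys by (simp add: contract_def)
  also have "contract y \<psi> (z # del j ys') = isgn (int j) (contract y \<psi> (ys'[j := z]))"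
    using Suc.hyps[OF skew_contract[OF Suc.prems(1)] j] .
  finally show ?case using ys by (simp add: contract_def isgn_def)
qed

lemma lie_deriv_Cons:
  "lie_deriv br act x \<psi> (y # ys) = lie_deriv br act x (contract y \<psi>) ys - contract (br x y) \<psi> ys"
  by (simp add: lie_deriv_def contract_def sum.lessThan_Suc_shift del: sum.lessThan_Suc)

text \<open>Cartan's formula \<open>\<iota>\<^sub>x d + d \<iota>\<^sub>x = L\<^sub>x\<close>, evaluated at \<open>x # xs\<close>.\<close>
lemma cartan_formula:
  assumes "skew \<psi>"
  shows "ce_diff br act \<psi> (x # xs) = lie_deriv br act x \<psi> xs - ce_diff br act (contract x \<psi>) xs"
proof -
  let ?n = "length xs" and ?xs = "x # xs"
  let ?t = "\<lambda>j i. isgn (int (i + j)) (\<psi> (br (?xs ! i) (?xs ! j) # del i (del j ?xs)))"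
  let ?t' = "\<lambda>j i. isgn (int (i + j)) (contract x \<psi> (br (xs ! i) (xs ! j) # del i (del j xs)))"
  have action_terms: "(\<Sum>i<length ?xs. isgn (int i) (act (?xs ! i) (\<psi> (del i ?xs))))
     = act x (\<psi> xs) - (\<Sum>i<?n. isgn (int i) (act (xs ! i) (contract x \<psi> (del i xs))))"
    by (simp only: length_Cons sum.lessThan_Suc_shift) (simp add: isgn_Suc contract_def sum_negf)
  have first_bracket: "?t (Suc j) 0 = - \<psi> (xs[j := br x (xs ! j)])" if "j < ?n" for j
    using skew_Cons_del[OF assms that] by (simp add: isgn_def)
  have later_bracket: "?t (Suc j) (Suc i) = - ?t' j i" for i j
    using skew_swap[OF assms, of "br (xs ! i) (xs ! j)" x "del i (del j xs)"]
    by (simp add: contract_def isgn_def)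
  have "(\<Sum>j<length ?xs. \<Sum>i<j. ?t j i) = (\<Sum>j<?n. ?t (Suc j) 0 + (\<Sum>i<j. ?t (Suc j) (Suc i)))"
    by (simp only: length_Cons sum.lessThan_Suc_shift lessThan_0 sum.empty add_0_left)
  also have "\<dots> = (\<Sum>j<?n. - \<psi> (xs[j := br x (xs ! j)]) + (\<Sum>i<j. - ?t' j i))"
    by (intro sum.cong refl arg_cong2[where f = "(+)"]) (simp_all only: first_bracket later_bracket lessThan_iff)
  also have "\<dots> = - (\<Sum>j<?n. \<psi> (xs[j := br x (xs ! j)])) - (\<Sum>j<?n. \<Sum>i<j. ?t' j i)"
    by (simp only: sum.distrib sum_negf diff_conv_add_uminus)
  finally have bracket_terms: "(\<Sum>j<length ?xs. \<Sum>i<j. ?t j i)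
      = - (\<Sum>j<?n. \<psi> (xs[j := br x (xs ! j)])) - (\<Sum>j<?n. \<Sum>i<j. ?t' j i)" .
  show ?thesis
    unfolding ce_diff_def lie_deriv_def action_terms bracket_terms by (simp add: algebra_simps)
qed

section \<open>Expansion of the shuffle product\<close>

definition homogeneous :: "nat \<Rightarrow> ('g list \<Rightarrow> 'a::zero) \<Rightarrow> bool" where
  "homogeneous p \<phi> \<longleftrightarrow> (\<forall>ys. length ys \<noteq> p \<longrightarrow> \<phi> ys = 0)"

lemma homogeneousD: "homogeneous p \<phi> \<Longrightarrow> length ys \<noteq> p \<Longrightarrow> \<phi> ys = 0"
  by (simp add: homogeneous_def)

lemma homogeneous_contract: "homogeneous p \<phi> \<Longrightarrow> homogeneous (p - 1) (contract x \<phi>)"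
  by (cases p) (auto simp: homogeneous_def contract_def)

lemma homogeneous_zero [simp]: "homogeneous p (\<lambda>_. 0)"
  by (simp add: homogeneous_def)

lemma homogeneous_0_contract: "homogeneous 0 \<phi> \<Longrightarrow> contract x \<phi> = (\<lambda>_. 0)"
  by (auto simp: homogeneous_def contract_def)

definition shuffle_term :: "nat \<Rightarrow> ('g list \<Rightarrow> 'a) \<Rightarrow> ('a \<Rightarrow> 'g list \<Rightarrow> 'b::ab_group_add) \<Rightarrow> 'g list
    \<Rightarrow> nat set \<Rightarrow> 'b" where
  "shuffle_term p \<phi> F xs I =
     isgn (int ((\<Sum>i\<in>I. i) + p * (p - 1) div 2)) (F (\<phi> (nths xs I)) (nths xs ({..<length xs} - I)))"

lemma shuffle_ext_eq_sum:
  "shuffle_ext p q \<phi> F xs =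
     (if length xs = p + q then \<Sum>I\<in>{I. I \<subseteq> {..<p + q} \<and> card I = p}. shuffle_term p \<phi> F xs I else 0)"
  by (simp add: shuffle_ext_def shuffle_term_def)

lemma shuffle_ext_zero_left: "(\<And>ys. \<phi> ys = 0) \<Longrightarrow> (\<And>ys. F 0 ys = 0) \<Longrightarrow> shuffle_ext p q \<phi> F xs = 0"
  by (simp add: shuffle_ext_def)

lemma shuffle_ext_zero_right: "(\<And>v ys. F v ys = 0) \<Longrightarrow> shuffle_ext p q \<phi> F xs = 0"
  by (simp add: shuffle_ext_def)

lemma shuffle_ext_Nil: "shuffle_ext p q \<phi> F [] = (if p = 0 \<and> q = 0 then F (\<phi> []) [] else 0)"
proof -
  have "{I. I \<subseteq> {..<0::nat} \<and> card I = 0} = {{}}" by auto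
  then show ?thesis by (auto simp: shuffle_ext_def)
qed

lemma shuffle_ext_0_left: "shuffle_ext 0 m \<phi> G xs = (if length xs = m then G (\<phi> []) xs else 0)"
proof -
  have "{I. I \<subseteq> {..<m} \<and> card I = 0} = {{}}"
    by (auto dest: finite_subset[OF _ finite_lessThan])
  moreover have "length xs = m \<Longrightarrow> nths xs {..<m} = xs" by (simp add: nths_all)
  ultimately show ?thesis by (simp add: shuffle_ext_def)
qed

lemma sum_Suc_image: "finite J \<Longrightarrow> (\<Sum>i\<in>Suc ` J. i) = (\<Sum>i\<in>J. i) + card J"
  by (induct rule: finite_induct) (auto simp: image_iff)

lemma shuffle_term_insert_0:
  assumes "finite J" "card J = m"
  shows "shuffle_term (Suc m) \<phi> F (x # xs) (insert 0 (Suc ` J)) = shuffle_term m (contract x \<phi>) F xs J"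
proof -
  have "{j. Suc j \<in> {..<length (x # xs)} - insert 0 (Suc ` J)} = {..<length xs} - J" by auto
  then have nths_compl: "nths (x # xs) ({..<length (x # xs)} - insert 0 (Suc ` J)) = nths xs ({..<length xs} - J)"
    by (simp add: nths_Cons)
  have "Suc m * m = m * (m - 1) + 2 * m" by (cases m) (simp_all add: algebra_simps)
  then have "(\<Sum>i\<in>insert 0 (Suc ` J). i) + Suc m * (Suc m - 1) div 2
      = ((\<Sum>i\<in>J. i) + m * (m - 1) div 2) + 2 * m"
    using assms by (simp add: sum_Suc_image)
  then show ?thesis
    unfolding shuffle_term_def nths_compl by (simp add: nths_Cons contract_def isgn_def image_iff)
qed

lemma shuffle_term_Suc_image:
  assumes "finite J" "card J = p"
  shows "shuffle_term p \<phi> F (x # xs) (Suc ` J) = isgn (int p) (shuffle_term p \<phi> (\<lambda>v. contract x (F v)) xs J)"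
proof -
  have "{j. Suc j \<in> {..<length (x # xs)} - Suc ` J} = {..<length xs} - J" by auto
  then have "nths (x # xs) ({..<length (x # xs)} - Suc ` J) = x # nths xs ({..<length xs} - J)"
    by (simp add: nths_Cons)
  then show ?thesis
    using assms by (simp add: shuffle_term_def nths_Cons contract_def image_iff sum_Suc_image isgn_def)
qed

lemma bij_betw_insert_0_Suc_image:
  "bij_betw (\<lambda>J. insert 0 (Suc ` J)) {J. J \<subseteq> {..<N} \<and> card J = m}
     {I. I \<subseteq> {..<Suc N} \<and> card I = Suc m \<and> 0 \<in> I}"
proof (rule bij_betw_byWitness[where f'="\<lambda>I. {j. Suc j \<in> I}"])
  have reconstruct: "insert 0 (Suc ` {j. Suc j \<in> I}) = I" if "0 \<in> I" for I :: "nat set"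
    using that by (auto simp: image_iff) (metis not0_implies_Suc)
  show "\<forall>J\<in>{J. J \<subseteq> {..<N} \<and> card J = m}. {j. Suc j \<in> insert 0 (Suc ` J)} = J" by auto
  show "\<forall>I\<in>{I. I \<subseteq> {..<Suc N} \<and> card I = Suc m \<and> 0 \<in> I}. insert 0 (Suc ` {j. Suc j \<in> I}) = I"
    using reconstruct by blast
  show "(\<lambda>J. insert 0 (Suc ` J)) ` {J. J \<subseteq> {..<N} \<and> card J = m}
      \<subseteq> {I. I \<subseteq> {..<Suc N} \<and> card I = Suc m \<and> 0 \<in> I}"
    by (auto simp: card_image finite_subset)
  show "(\<lambda>I. {j. Suc j \<in> I}) ` {I. I \<subseteq> {..<Suc N} \<and> card I = Suc m \<and> 0 \<in> I}
      \<subseteq> {J. J \<subseteq> {..<N} \<and> card J = m}"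
  proof clarify
    fix I assume I: "I \<subseteq> {..<Suc N}" "card I = Suc m" "0 \<in> I"
    have "finite {j. Suc j \<in> I}" using I(1) by (auto intro: finite_subset[of _ "{..<N}"])
    moreover have "card I = Suc (card {j. Suc j \<in> I})"
      using calculation reconstruct[OF I(3)] by (metis card_image card_insert_disjoint finite_imageI
        imageE inj_Suc inj_on_subset nat.distinct(1) subset_UNIV)
    ultimately show "{j. Suc j \<in> I} \<subseteq> {..<N} \<and> card {j. Suc j \<in> I} = m"
      using I by auto
  qed
qed

lemma bij_betw_Suc_image:
  "bij_betw (\<lambda>J. Suc ` J) {J. J \<subseteq> {..<N} \<and> card J = m}
     {I. I \<subseteq> {..<Suc N} \<and> card I = m \<and> 0 \<notin> I}"
proof (rule bij_betw_byWitness[where f'="\<lambda>I. {j. Suc j \<in> I}"])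
  have reconstruct: "Suc ` {j. Suc j \<in> I} = I" if "0 \<notin> I" for I :: "nat set"
    using that by (auto simp: image_iff) (metis not0_implies_Suc)
  show "\<forall>J\<in>{J. J \<subseteq> {..<N} \<and> card J = m}. {j. Suc j \<in> Suc ` J} = J" by auto
  show "\<forall>I\<in>{I. I \<subseteq> {..<Suc N} \<and> card I = m \<and> 0 \<notin> I}. Suc ` {j. Suc j \<in> I} = I"
    using reconstruct by blast
  show "(\<lambda>J. Suc ` J) ` {J. J \<subseteq> {..<N} \<and> card J = m} \<subseteq> {I. I \<subseteq> {..<Suc N} \<and> card I = m \<and> 0 \<notin> I}"
    by (auto simp: card_image)
  show "(\<lambda>I. {j. Suc j \<in> I}) ` {I. I \<subseteq> {..<Suc N} \<and> card I = m \<and> 0 \<notin> I}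
      \<subseteq> {J. J \<subseteq> {..<N} \<and> card J = m}"
  proof
    fix J assume "J \<in> (\<lambda>I. {j. Suc j \<in> I}) ` {I. I \<subseteq> {..<Suc N} \<and> card I = m \<and> 0 \<notin> I}"
    then obtain I where I: "I \<subseteq> {..<Suc N}" "card I = m" "0 \<notin> I" "J = {j. Suc j \<in> I}" by auto
    have "card I = card J"
      using reconstruct[OF I(3)] I(4) by (metis card_image inj_Suc inj_on_subset subset_UNIV)
    then show "J \<in> {J. J \<subseteq> {..<N} \<and> card J = m}"
      using I by auto
  qed
qed

lemma shuffle_ext_contract_left_eq_0:
  assumes "homogeneous p \<phi>" "F 0 = (\<lambda>_. 0)" "p = 0 \<or> length (x # xs) \<noteq> p + q"
  shows "shuffle_ext (p - 1) q (contract x \<phi>) F xs = 0"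
proof (cases "p = 0")
  case True
  then show ?thesis using assms by (intro shuffle_ext_zero_left) (auto simp: contract_def homogeneous_def)
qed (use assms in \<open>auto simp: shuffle_ext_def\<close>)

lemma shuffle_ext_contract_right_eq_0:
  assumes "\<forall>v. homogeneous q (F v)" "q = 0 \<or> length (x # xs) \<noteq> p + q"
  shows "shuffle_ext p (q - 1) \<phi> (\<lambda>v. contract x (F v)) xs = 0"
proof (cases "q = 0")
  case True
  then show ?thesis using assms by (intro shuffle_ext_zero_right) (auto simp: contract_def homogeneous_def)
qed (use assms in \<open>auto simp: shuffle_ext_def\<close>)

lemma sum_shuffle_term_with_0:
  assumes len: "length (x # xs) = p + q" and \<phi>: "homogeneous p \<phi>" and Fz: "F 0 = (\<lambda>_. 0)"
  shows "(\<Sum>I\<in>{I. I \<subseteq> {..<p + q} \<and> card I = p \<and> 0 \<in> I}. shuffle_term p \<phi> F (x # xs) I)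
       = shuffle_ext (p - 1) q (contract x \<phi>) F xs"
proof (cases p)
  case 0
  have "I = {}" if "I \<subseteq> {..<p + q}" "card I = p" for I
    using that 0 by (metis card_0_eq finite_lessThan finite_subset)
  then have "{I. I \<subseteq> {..<p + q} \<and> card I = p \<and> 0 \<in> I} = {}" by blast
  then show ?thesis using shuffle_ext_contract_left_eq_0[where F = F, OF \<phi> Fz disjI1[OF 0]]
    by (simp only: sum.empty)
next
  case (Suc m)
  have "(\<Sum>I\<in>{I. I \<subseteq> {..<Suc (m + q)} \<and> card I = Suc m \<and> 0 \<in> I}. shuffle_term (Suc m) \<phi> F (x # xs) I)
      = (\<Sum>J\<in>{J. J \<subseteq> {..<m + q} \<and> card J = m}. shuffle_term (Suc m) \<phi> F (x # xs) (insert 0 (Suc ` J)))"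
    by (rule sum.reindex_bij_betw[OF bij_betw_insert_0_Suc_image, symmetric])
  also have "\<dots> = (\<Sum>J\<in>{J. J \<subseteq> {..<m + q} \<and> card J = m}. shuffle_term m (contract x \<phi>) F xs J)"
    by (intro sum.cong refl shuffle_term_insert_0) (auto intro: finite_subset)
  finally show ?thesis
    using len Suc by (simp add: shuffle_ext_eq_sum)
qed

lemma sum_shuffle_term_without_0:
  assumes len: "length (x # xs) = p + q" and F: "\<forall>v. homogeneous q (F v)"
  shows "(\<Sum>I\<in>{I. I \<subseteq> {..<p + q} \<and> card I = p \<and> 0 \<notin> I}. shuffle_term p \<phi> F (x # xs) I)
       = isgn (int p) (shuffle_ext p (q - 1) \<phi> (\<lambda>v. contract x (F v)) xs)"
proof (cases q)
  case 0
  have False if "I \<subseteq> {..<p + q}" "card I = p" "0 \<notin> I" for I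
  proof -
    have "card I \<le> card ({..<p} - {0})" using that 0 by (intro card_mono) auto
    then show False using that len 0 by simp
  qed
  then have "{I. I \<subseteq> {..<p + q} \<and> card I = p \<and> 0 \<notin> I} = {}" by auto
  then show ?thesis using shuffle_ext_contract_right_eq_0[OF F disjI1[OF 0]]
    by (simp only: sum.empty isgn_zero)
next
  case (Suc r)
  have "(\<Sum>I\<in>{I. I \<subseteq> {..<Suc (p + r)} \<and> card I = p \<and> 0 \<notin> I}. shuffle_term p \<phi> F (x # xs) I)
      = (\<Sum>J\<in>{J. J \<subseteq> {..<p + r} \<and> card J = p}. shuffle_term p \<phi> F (x # xs) (Suc ` J))"
    by (rule sum.reindex_bij_betw[OF bij_betw_Suc_image, symmetric])
  also have "\<dots> = (\<Sum>J\<in>{J. J \<subseteq> {..<p + r} \<and> card J = p}.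
                      isgn (int p) (shuffle_term p \<phi> (\<lambda>v. contract x (F v)) xs J))"
    by (intro sum.cong refl shuffle_term_Suc_image) (auto intro: finite_subset)
  finally show ?thesis
    using len Suc by (simp add: shuffle_ext_eq_sum isgn_sum)
qed

text \<open>Expansion of the shuffle product along the first argument: it lies either among the
  \<open>p\<close> arguments of \<open>\<phi>\<close> (the index set contains \<open>0\<close>) or among those of \<open>F\<close>.\<close>
lemma shuffle_ext_Cons:
  assumes \<phi>: "homogeneous p \<phi>" and F: "\<forall>v. homogeneous q (F v)" and Fz: "F 0 = (\<lambda>_. 0)"
  shows "shuffle_ext p q \<phi> F (x # xs) = shuffle_ext (p - 1) q (contract x \<phi>) F xs
           + isgn (int p) (shuffle_ext p (q - 1) \<phi> (\<lambda>v. contract x (F v)) xs)"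
proof (cases "length (x # xs) = p + q")
  case True
  let ?P = "\<lambda>I. I \<subseteq> {..<p + q} \<and> card I = p" and ?S = "shuffle_term p \<phi> F (x # xs)"
  have fin: "finite {I. ?P I}" by (rule finite_subset[of _ "Pow {..<p + q}"]) auto
  have "{I. ?P I} \<inter> {I. 0 \<in> I} = {I. ?P I \<and> 0 \<in> I}" "{I. ?P I} - {I. 0 \<in> I} = {I. ?P I \<and> 0 \<notin> I}"
    by auto
  then have "sum ?S {I. ?P I} = sum ?S {I. ?P I \<and> 0 \<in> I} + sum ?S {I. ?P I \<and> 0 \<notin> I}"
    using sum.Int_Diff[OF fin, of ?S "{I. 0 \<in> I}"] by (simp only:)
  then show ?thesis
    using True sum_shuffle_term_with_0[where F = F, OF True \<phi> Fz] sum_shuffle_term_without_0[OF True F]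
    by (simp add: shuffle_ext_eq_sum conj_assoc)
next
  case False
  then show ?thesis
    using shuffle_ext_contract_left_eq_0[where F = F, OF \<phi> Fz] shuffle_ext_contract_right_eq_0[OF F]
    by (simp add: shuffle_ext_def)
qed

definition add_subgroup :: "'a::ab_group_add set \<Rightarrow> bool" where
  "add_subgroup W \<longleftrightarrow> 0 \<in> W \<and> (\<forall>a\<in>W. \<forall>b\<in>W. a + b \<in> W \<and> a - b \<in> W \<and> - a \<in> W)"

definition additive_on :: "'a::ab_group_add set \<Rightarrow> ('a \<Rightarrow> 'g list \<Rightarrow> 'b::ab_group_add) \<Rightarrow> bool" where
  "additive_on W G \<longleftrightarrow> (\<forall>v\<in>W. \<forall>w\<in>W. G (v + w) = (\<lambda>ys. G v ys + G w ys))"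

definition additive_action :: "('g \<Rightarrow> 'b \<Rightarrow> 'b::ab_group_add) \<Rightarrow> bool" where
  "additive_action act \<longleftrightarrow> (\<forall>x a b. act x (a + b) = act x a + act x b)"

definition acts_on :: "'a::zero set \<Rightarrow> ('g \<Rightarrow> 'a \<Rightarrow> 'a) \<Rightarrow> bool" where
  "acts_on W act \<longleftrightarrow> (\<forall>x. \<forall>v\<in>W. act x v \<in> W) \<and> (\<forall>x. act x 0 = 0)"

lemma add_subgroup_zero: "add_subgroup W \<Longrightarrow> 0 \<in> W"
  by (simp add: add_subgroup_def)

lemma add_subgroup_isgn: "add_subgroup W \<Longrightarrow> v \<in> W \<Longrightarrow> isgn k v \<in> W"
  by (simp add: isgn_def add_subgroup_def)

lemma add_subgroup_sum: "add_subgroup W \<Longrightarrow> (\<And>i. f i \<in> W) \<Longrightarrow> sum f A \<in> W"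
  by (induct A rule: infinite_finite_induct) (auto simp: add_subgroup_def)

lemma additive_on_add: "additive_on W G \<Longrightarrow> v \<in> W \<Longrightarrow> w \<in> W \<Longrightarrow> G (v + w) ys = G v ys + G w ys"
  unfolding additive_on_def by metis

lemma additive_on_zero: "additive_on W G \<Longrightarrow> add_subgroup W \<Longrightarrow> G 0 = (\<lambda>_. 0)"
  using additive_on_add[of W G 0 0] by (auto simp: add_subgroup_def)

lemma additive_on_diff:
  assumes "additive_on W G" "add_subgroup W" "v \<in> W" "w \<in> W"
  shows "G (v - w) ys = G v ys - G w ys"
proof -
  have "v - w \<in> W" using assms by (simp add: add_subgroup_def)
  then have "G (v - w + w) ys = G (v - w) ys + G w ys" using additive_on_add assms by blast
  then show ?thesis by (simp add: algebra_simps)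
qed

lemma additive_on_isgn: "additive_on W G \<Longrightarrow> add_subgroup W \<Longrightarrow> v \<in> W \<Longrightarrow> G (isgn k v) ys = isgn k (G v ys)"
  using additive_on_diff[of W G 0 v ys] additive_on_zero[of W G] by (auto simp: isgn_def add_subgroup_def)

lemma additive_on_contract: "additive_on W G \<Longrightarrow> additive_on W (\<lambda>v. contract x (G v))"
  by (simp add: additive_on_def contract_def)

lemma acts_on_zero: "acts_on W act \<Longrightarrow> \<forall>x. act x 0 = 0"
  by (simp add: acts_on_def)

lemma additive_action_add: "additive_action act \<Longrightarrow> act x (a + b) = act x a + act x b"
  unfolding additive_action_def by blast

lemma additive_action_zero: "additive_action act \<Longrightarrow> act x 0 = 0"
  using additive_action_add[of act x 0 0] by simp

lemma additive_action_minus: "additive_action act \<Longrightarrow> act x (- a) = - act x a"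
  using additive_action_add[of act x a "- a"] additive_action_zero[of act x] by (simp add: minus_unique)

lemma additive_action_isgn: "additive_action act \<Longrightarrow> act x (isgn k a) = isgn k (act x a)"
  by (simp add: isgn_def additive_action_minus)

lemma range_contract: "range \<phi> \<subseteq> W \<Longrightarrow> range (contract x \<phi>) \<subseteq> W"
  by (auto simp: contract_def)

lemma shuffle_ext_add_left:
  assumes "additive_on W G" "range \<phi>1 \<subseteq> W" "range \<phi>2 \<subseteq> W"
  shows "shuffle_ext p q (\<lambda>ys. \<phi>1 ys + \<phi>2 ys) G xs = shuffle_ext p q \<phi>1 G xs + shuffle_ext p q \<phi>2 G xs"
  using assms by (simp add: image_subset_iff shuffle_ext_def additive_on_add isgn_add sum.distrib)

lemma shuffle_ext_diff_left:
  assumes "additive_on W G" "add_subgroup W" "range \<phi>1 \<subseteq> W" "range \<phi>2 \<subseteq> W"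
  shows "shuffle_ext p q (\<lambda>ys. \<phi>1 ys - \<phi>2 ys) G xs = shuffle_ext p q \<phi>1 G xs - shuffle_ext p q \<phi>2 G xs"
  using assms by (simp add: image_subset_iff shuffle_ext_def additive_on_diff isgn_diff sum_subtractf)

lemma shuffle_ext_isgn_left:
  assumes "additive_on W G" "add_subgroup W" "range \<phi> \<subseteq> W"
  shows "shuffle_ext p q (\<lambda>ys. isgn k (\<phi> ys)) G xs = isgn k (shuffle_ext p q \<phi> G xs)"
  using assms by (simp add: image_subset_iff shuffle_ext_def additive_on_isgn isgn_isgn isgn_sum add.commute)

lemma shuffle_ext_minus_left:
  assumes "additive_on W G" "add_subgroup W" "range \<phi> \<subseteq> W"
  shows "shuffle_ext p q (\<lambda>ys. - \<phi> ys) G xs = - shuffle_ext p q \<phi> G xs"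
  using shuffle_ext_isgn_left[OF assms, where k=1] by (simp add: isgn_def)

lemma shuffle_ext_add_right:
  "shuffle_ext p q \<phi> (\<lambda>v ys. G1 v ys + G2 v ys) xs = shuffle_ext p q \<phi> G1 xs + shuffle_ext p q \<phi> G2 xs"
  by (simp add: shuffle_ext_def isgn_add sum.distrib)

lemma shuffle_ext_diff_right:
  "shuffle_ext p q \<phi> (\<lambda>v ys. G1 v ys - G2 v ys) xs = shuffle_ext p q \<phi> G1 xs - shuffle_ext p q \<phi> G2 xs"
  by (simp add: shuffle_ext_def isgn_diff sum_subtractf)

lemma shuffle_ext_minus_right: "shuffle_ext p q \<phi> (\<lambda>v ys. - G v ys) xs = - shuffle_ext p q \<phi> G xs"
  by (simp add: shuffle_ext_def isgn_minus sum_negf)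

lemma shuffle_ext_cong:
  "(\<And>ys. \<phi>1 ys = \<phi>2 ys) \<Longrightarrow> (\<And>v ys. v \<in> range \<phi>1 \<Longrightarrow> G1 v ys = G2 v ys) \<Longrightarrow>
    shuffle_ext p q \<phi>1 G1 xs = shuffle_ext p q \<phi>2 G2 xs"
  by (simp add: shuffle_ext_def)

lemma shuffle_ext_comp_left: "shuffle_ext p q (\<lambda>ys. d (\<phi> ys)) G xs = shuffle_ext p q \<phi> (\<lambda>v. G (d v)) xs"
  by (simp add: shuffle_ext_def)

lemma shuffle_ext_zero_on_range:
  assumes "\<forall>v\<in>range \<phi>. G v = (\<lambda>_. 0)"
  shows "shuffle_ext p s \<phi> G xs = 0"
proof -
  have "shuffle_ext p s \<phi> G xs = shuffle_ext p s \<phi> (\<lambda>_ _. 0) xs"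
    by (rule shuffle_ext_cong) (use assms in auto)
  then show ?thesis by (simp add: shuffle_ext_zero_right)
qed

lemma ce_diff_Nil: "ce_diff br act \<psi> [] = 0"
  by (simp add: ce_diff_def)

lemma ce_diff_zero: "\<forall>x. act x 0 = 0 \<Longrightarrow> ce_diff br act (\<lambda>_. 0) xs = 0"
  by (simp add: ce_diff_def)

lemma ce_diff_add:
  assumes "additive_action act"
  shows "ce_diff br act (\<lambda>ys. \<psi>1 ys + \<psi>2 ys) xs = ce_diff br act \<psi>1 xs + ce_diff br act \<psi>2 xs"
  using assms by (simp add: ce_diff_def additive_action_add isgn_add sum.distrib algebra_simps)

lemma ce_diff_isgn:
  assumes "additive_action act"
  shows "ce_diff br act (\<lambda>ys. isgn k (\<psi> ys)) xs = isgn k (ce_diff br act \<psi> xs)"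
  using assms by (simp add: ce_diff_def additive_action_isgn isgn_isgn isgn_add isgn_sum add.commute)

lemma ce_diff_sum:
  assumes "additive_action act"
  shows "ce_diff br act (\<lambda>ys. \<Sum>q\<in>A. F q ys) xs = (\<Sum>q\<in>A. ce_diff br act (F q) xs)"
  using assms by (induct A rule: infinite_finite_induct)
    (simp_all add: ce_diff_add ce_diff_zero additive_action_zero)

lemma ce_diff_apply_cong:
  assumes "\<And>x c. act1 x c v = act2 x c v"
  shows "ce_diff br act1 F xs v = ce_diff br act2 F xs v"
  using assms by (simp add: ce_diff_def sum_fun_apply isgn_fun_apply)

lemma range_ce_diff:
  assumes "add_subgroup W" "acts_on W act" "range \<phi> \<subseteq> W"
  shows "range (ce_diff br act \<phi>) \<subseteq> W"
proof (intro image_subsetI)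
  fix ys
  have "(\<Sum>i<length ys. isgn (int i) (act (ys ! i) (\<phi> (del i ys)))) \<in> W"
    "(\<Sum>j<length ys. \<Sum>i<j. isgn (int (i + j)) (\<phi> (br (ys ! i) (ys ! j) # del i (del j ys)))) \<in> W"
    using assms by (auto intro!: add_subgroup_sum add_subgroup_isgn simp: acts_on_def)
  then show "ce_diff br act \<phi> ys \<in> W" using assms(1) unfolding ce_diff_def add_subgroup_def by auto
qed

lemma homogeneous_ce_diff:
  assumes act0: "\<forall>x. act x 0 = 0" and \<phi>: "homogeneous p \<phi>"
  shows "homogeneous (Suc p) (ce_diff br act \<phi>)"
  unfolding homogeneous_def
proof (intro allI impI)
  fix xs :: "'a list" assume len: "length xs \<noteq> Suc p"
  have "\<phi> (del i xs) = 0" if "i < length xs" for i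
    using len that by (intro homogeneousD[OF \<phi>]) simp
  moreover have "\<phi> (br (xs ! i) (xs ! j) # del i (del j xs)) = 0" if "i < j" "j < length xs" for i j
    using len that by (intro homogeneousD[OF \<phi>]) auto
  ultimately show "ce_diff br act \<phi> xs = 0" using act0 by (simp add: ce_diff_def)
qed

lemma lie_deriv_add:
  assumes "additive_action act"
  shows "lie_deriv br act x (\<lambda>ys. \<psi>1 ys + \<psi>2 ys) xs = lie_deriv br act x \<psi>1 xs + lie_deriv br act x \<psi>2 xs"
  using assms by (simp add: lie_deriv_def additive_action_add sum.distrib algebra_simps)

lemma lie_deriv_isgn:
  assumes "additive_action act"
  shows "lie_deriv br act x (\<lambda>ys. isgn k (\<psi> ys)) xs = isgn k (lie_deriv br act x \<psi> xs)"
  using assms by (simp add: lie_deriv_def additive_action_isgn isgn_diff isgn_sum)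

lemma range_lie_deriv:
  assumes "add_subgroup W" "acts_on W act" "range \<phi> \<subseteq> W"
  shows "range (lie_deriv br act x \<phi>) \<subseteq> W"
proof (intro image_subsetI)
  fix ys
  have "(\<Sum>i<length ys. \<phi> (ys[i := br x (ys ! i)])) \<in> W"
    using assms by (auto intro: add_subgroup_sum)
  then show "lie_deriv br act x \<phi> ys \<in> W" using assms unfolding lie_deriv_def add_subgroup_def acts_on_def by auto
qed

lemma homogeneous_lie_deriv: "\<forall>x. act x 0 = 0 \<Longrightarrow> homogeneous p \<phi> \<Longrightarrow> homogeneous p (lie_deriv br act x \<phi>)"
  by (simp add: homogeneous_def lie_deriv_def)

lemma contract_lie_deriv:
  "contract y (lie_deriv br act x \<phi>) = (\<lambda>zs. lie_deriv br act x (contract y \<phi>) zs - contract (br x y) \<phi> zs)"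
  by (rule ext) (simp add: contract_def[of y] lie_deriv_Cons)

lemma contract_shuffle_ext:
  assumes "homogeneous p \<phi>" "\<forall>v. homogeneous s (G v)" "G 0 = (\<lambda>_. 0)"
  shows "contract x (shuffle_ext p s \<phi> G)
    = (\<lambda>zs. shuffle_ext (p - 1) s (contract x \<phi>) G zs + isgn (int p) (shuffle_ext p (s - 1) \<phi> (\<lambda>v. contract x (G v)) zs))"
  unfolding contract_def[of x "shuffle_ext p s \<phi> G"] by (intro ext shuffle_ext_Cons assms)

lemma homogeneous_contract_family:
  "\<forall>v. homogeneous s (G v) \<Longrightarrow> \<forall>v. homogeneous (s - 1) (contract x (G v))"
  by (intro allI homogeneous_contract) (rule spec)

section \<open>The Leibniz rule\<close>

text \<open>The Lie derivative of a family \<open>G\<close>, viewed as a form with values in \<open>Hom(W, B)\<close>.\<close>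
definition lie_deriv_hom :: "('g \<Rightarrow> 'g \<Rightarrow> 'g) \<Rightarrow> ('g \<Rightarrow> 'b \<Rightarrow> 'b::ab_group_add) \<Rightarrow> ('g \<Rightarrow> 'a \<Rightarrow> 'a) \<Rightarrow> 'g
    \<Rightarrow> ('a \<Rightarrow> 'g list \<Rightarrow> 'b) \<Rightarrow> 'a \<Rightarrow> 'g list \<Rightarrow> 'b" where
  "lie_deriv_hom br actB act x G = (\<lambda>v zs. lie_deriv br actB x (G v) zs - G (act x v) zs)"

lemma homogeneous_lie_deriv_hom:
  "additive_action actB \<Longrightarrow> \<forall>v. homogeneous s (G v) \<Longrightarrow> \<forall>v. homogeneous s (lie_deriv_hom br actB act x G v)"
  by (simp add: lie_deriv_hom_def lie_deriv_def homogeneous_def additive_action_zero)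

lemma lie_deriv_hom_at_zero:
  "additive_action actB \<Longrightarrow> acts_on W act \<Longrightarrow> G 0 = (\<lambda>_. 0) \<Longrightarrow> lie_deriv_hom br actB act x G 0 = (\<lambda>_. 0)"
  by (simp add: lie_deriv_hom_def lie_deriv_def acts_on_def additive_action_zero fun_eq_iff)

lemma contract_lie_deriv_hom:
  "(\<lambda>v. contract y (lie_deriv_hom br actB act x G v))
    = (\<lambda>v zs. lie_deriv_hom br actB act x (\<lambda>v. contract y (G v)) v zs - contract (br x y) (G v) zs)"
  by (intro ext) (simp add: contract_def lie_deriv_hom_def lie_deriv_Cons)

lemma lie_deriv_shuffle_ext:
  assumes actB: "additive_action actB" and W: "add_subgroup W" and act: "acts_on W act"
    and \<phi>: "homogeneous p \<phi>" "range \<phi> \<subseteq> W" and G: "\<forall>v. homogeneous s (G v)" "additive_on W G"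
  shows "lie_deriv br actB x (shuffle_ext p s \<phi> G) ys
       = shuffle_ext p s (lie_deriv br act x \<phi>) G ys + shuffle_ext p s \<phi> (lie_deriv_hom br actB act x G) ys"
  using \<phi> G
proof (induct ys arbitrary: p s \<phi> G)
  case Nil
  then show ?case
    using add_subgroup_zero[OF W] acts_on_zero[OF act] additive_action_zero[OF actB]
    by (simp add: lie_deriv_def lie_deriv_hom_def shuffle_ext_Nil additive_on_add)
next
  case (Cons y ys)
  note \<phi> = Cons.prems(1,2) and G = Cons.prems(3,4)
  let ?yG = "\<lambda>v. contract y (G v)" and ?L = "lie_deriv_hom br actB act x"
  have Gz: "G 0 = (\<lambda>_. 0)" using additive_on_zero[OF G(2) W] .
  have "lie_deriv br actB x (shuffle_ext p s \<phi> G) (y # ys)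
      = lie_deriv br actB x (shuffle_ext (p - 1) s (contract y \<phi>) G) ys
        + isgn (int p) (lie_deriv br actB x (shuffle_ext p (s - 1) \<phi> ?yG) ys)
        - (shuffle_ext (p - 1) s (contract (br x y) \<phi>) G ys
           + isgn (int p) (shuffle_ext p (s - 1) \<phi> (\<lambda>v. contract (br x y) (G v)) ys))"
    unfolding lie_deriv_Cons contract_shuffle_ext[OF \<phi>(1) G(1) Gz]
      lie_deriv_add[OF actB] lie_deriv_isgn[OF actB] ..
  also have "\<dots> = shuffle_ext (p - 1) s (contract y (lie_deriv br act x \<phi>)) G ys
        + isgn (int p) (shuffle_ext p (s - 1) (lie_deriv br act x \<phi>) ?yG ys)
      + (shuffle_ext (p - 1) s (contract y \<phi>) (?L G) ys
        + isgn (int p) (shuffle_ext p (s - 1) \<phi> (\<lambda>v. contract y (?L G v)) ys))"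
    unfolding Cons.hyps[OF homogeneous_contract[OF \<phi>(1)] range_contract[OF \<phi>(2)] G]
      Cons.hyps[OF \<phi> homogeneous_contract_family[OF G(1)] additive_on_contract[OF G(2)]]
      contract_lie_deriv contract_lie_deriv_hom shuffle_ext_diff_right
      shuffle_ext_diff_left[OF G(2) W range_lie_deriv[OF W act range_contract[OF \<phi>(2)]] range_contract[OF \<phi>(2)]]
    by (simp add: isgn_add isgn_diff algebra_simps)
  also have "\<dots> = shuffle_ext p s (lie_deriv br act x \<phi>) G (y # ys) + shuffle_ext p s \<phi> (?L G) (y # ys)"
    unfolding shuffle_ext_Cons[OF homogeneous_lie_deriv[where act = act, OF acts_on_zero[OF act] \<phi>(1)] G(1) Gz]
      shuffle_ext_Cons[OF \<phi>(1) homogeneous_lie_deriv_hom[OF actB G(1)] lie_deriv_hom_at_zero[where G = G, OF actB act Gz]] ..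
  finally show ?case .
qed

text \<open>Exchanging the first two arguments: the terms with both arguments on the same side
  change sign by skewness, and the two mixed terms are exchanged with opposite signs.\<close>
lemma shuffle_ext_swap:
  assumes W: "add_subgroup W"
    and \<phi>: "homogeneous p \<phi>" "range \<phi> \<subseteq> W" "skew \<phi>"
    and G: "\<forall>v. homogeneous s (G v)" "additive_on W G" "\<forall>v. skew (G v)"
  shows "shuffle_ext p s \<phi> G (x # y # bs) = - shuffle_ext p s \<phi> G (y # x # bs)"
proof -
  have Gz: "G 0 = (\<lambda>_. 0)" using additive_on_zero[OF G(2) W] .
  have contract_Gz: "(\<lambda>v. contract z (G v)) 0 = (\<lambda>_. 0)" for z
    using Gz by (simp add: contract_def)
  define A where "A = (\<lambda>x y. shuffle_ext (p - 1 - 1) s (contract y (contract x \<phi>)) G bs)"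
  define B where "B = (\<lambda>x y. shuffle_ext (p - 1) (s - 1) (contract x \<phi>) (\<lambda>v. contract y (G v)) bs)"
  define D where "D = (\<lambda>x y. shuffle_ext p (s - 1 - 1) \<phi> (\<lambda>v. contract y (contract x (G v))) bs)"
  have expand: "shuffle_ext p s \<phi> G (x # y # bs)
      = A x y + D x y + (isgn (int (p - 1)) (B x y) + isgn (int p) (B y x))" for x y
    unfolding shuffle_ext_Cons[OF \<phi>(1) G(1) Gz] A_def B_def D_def
      shuffle_ext_Cons[OF homogeneous_contract[OF \<phi>(1)] G(1) Gz]
      shuffle_ext_Cons[OF \<phi>(1) homogeneous_contract_family[OF G(1)] contract_Gz]
    by (simp add: Gz contract_def isgn_add algebra_simps)
  have "contract y (contract x \<phi>) = (\<lambda>zs. - contract x (contract y \<phi>) zs)"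
    by (rule ext) (simp add: contract_def skew_swap[OF \<phi>(3), of x y])
  then have A_swap: "A x y = - A y x"
    unfolding A_def using range_contract[OF range_contract[OF \<phi>(2)]]
    by (simp add: shuffle_ext_minus_left[OF G(2) W])
  have "(\<lambda>v. contract y (contract x (G v))) = (\<lambda>v zs. - contract x (contract y (G v)) zs)"
    by (intro ext) (simp add: contract_def skew_swap[OF G(3)[rule_format], of _ x y])
  then have D_swap: "D x y = - D y x"
    unfolding D_def by (simp add: shuffle_ext_minus_right)
  have B_swap: "isgn (int (p - 1)) (B x y) + isgn (int p) (B y x)
      = - (isgn (int (p - 1)) (B y x) + isgn (int p) (B x y))"
  proof (cases p)
    case 0
    then have "B u w = 0" for u w
      unfolding B_def using homogeneous_0_contract[of \<phi>] \<phi>(1) Gz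
      by (simp add: shuffle_ext_zero_left contract_def)
    then show ?thesis by simp
  qed (simp add: isgn_def)
  show ?thesis
    unfolding expand[of x y] expand[of y x] A_swap D_swap B_swap by (simp add: algebra_simps)
qed

lemma skew_shuffle_ext:
  assumes W: "add_subgroup W"
    and \<phi>: "homogeneous p \<phi>" "range \<phi> \<subseteq> W" "skew \<phi>"
    and G: "\<forall>v. homogeneous s (G v)" "additive_on W G" "\<forall>v. skew (G v)"
  shows "skew (shuffle_ext p s \<phi> G)"
  unfolding skew_def
proof (intro allI)
  fix as x y bs
  show "shuffle_ext p s \<phi> G (as @ x # y # bs) = - shuffle_ext p s \<phi> G (as @ y # x # bs)"
    using \<phi> G
  proof (induct as arbitrary: p s \<phi> G)
    case Nil
    show ?case unfolding append_Nil by (rule shuffle_ext_swap[OF W Nil.prems])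
  next
    case (Cons a as)
    have IH1: "shuffle_ext (p - 1) s (contract a \<phi>) G (as @ x # y # bs)
        = - shuffle_ext (p - 1) s (contract a \<phi>) G (as @ y # x # bs)"
      by (rule Cons.hyps[OF homogeneous_contract range_contract skew_contract])
        (use Cons.prems in \<open>simp_all add: skew_contract\<close>)
    have IH2: "shuffle_ext p (s - 1) \<phi> (\<lambda>v. contract a (G v)) (as @ x # y # bs)
        = - shuffle_ext p (s - 1) \<phi> (\<lambda>v. contract a (G v)) (as @ y # x # bs)"
      by (rule Cons.hyps[OF _ _ _ homogeneous_contract_family additive_on_contract])
        (use Cons.prems in \<open>simp_all add: skew_contract\<close>)
    show ?case
      using IH1 IH2 additive_on_zero[OF Cons.prems(5) W]
      by (simp add: shuffle_ext_Cons[OF Cons.prems(1,4)] isgn_minus)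
  qed
qed

text \<open>A family \<open>G\<close> of forms indexed by \<open>W\<close> is a form with values in \<open>Hom(W, B)\<close>;
  \<open>ce_diff_hom\<close> is its Chevalley--Eilenberg differential for the action \<open>hom_action\<close>.\<close>
definition hom_action :: "('g \<Rightarrow> 'b \<Rightarrow> 'b::ab_group_add) \<Rightarrow> ('g \<Rightarrow> 'a \<Rightarrow> 'a) \<Rightarrow> 'g \<Rightarrow> ('a \<Rightarrow> 'b) \<Rightarrow> 'a \<Rightarrow> 'b" where
  "hom_action actB act x c = (\<lambda>v. actB x (c v) - c (act x v))"

definition ce_diff_hom :: "('g::ab_group_add \<Rightarrow> 'g \<Rightarrow> 'g) \<Rightarrow> ('g \<Rightarrow> 'b \<Rightarrow> 'b::ab_group_add) \<Rightarrow> ('g \<Rightarrow> 'a \<Rightarrow> 'a)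
    \<Rightarrow> ('a \<Rightarrow> 'g list \<Rightarrow> 'b) \<Rightarrow> 'a \<Rightarrow> 'g list \<Rightarrow> 'b" where
  "ce_diff_hom br actB act G = (\<lambda>v ys. ce_diff br (hom_action actB act) (\<lambda>zs w. G w zs) ys v)"

lemma ce_diff_hom_const_zero:
  "additive_action actB \<Longrightarrow> ce_diff_hom br actB act (\<lambda>_ _. 0) = (\<lambda>_ _. 0)"
  by (simp add: ce_diff_hom_def ce_diff_def hom_action_def sum_fun_apply isgn_fun_apply
      additive_action_zero fun_eq_iff)

lemma ce_diff_hom_at_zero:
  assumes "additive_action actB" "acts_on W act" "G 0 = (\<lambda>_. 0)"
  shows "ce_diff_hom br actB act G 0 = (\<lambda>_. 0)"
  using assms by (simp add: ce_diff_hom_def ce_diff_def hom_action_def sum_fun_apply isgn_fun_apply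
      additive_action_zero acts_on_def fun_eq_iff)

lemma homogeneous_ce_diff_hom:
  assumes "additive_action actB" "\<forall>v. homogeneous s (G v)"
  shows "\<forall>v. homogeneous (Suc s) (ce_diff_hom br actB act G v)"
proof
  fix v
  have "homogeneous s (\<lambda>zs w. G w zs)"
    using assms(2) by (simp add: homogeneous_def fun_eq_iff)
  moreover have "\<forall>x. hom_action actB act x 0 = 0"
    using assms(1) by (simp add: hom_action_def additive_action_zero fun_eq_iff)
  ultimately show "homogeneous (Suc s) (ce_diff_hom br actB act G v)"
    using homogeneous_ce_diff[of "hom_action actB act"] by (simp add: ce_diff_hom_def homogeneous_def)
qed

lemma contract_ce_diff:
  "skew \<phi> \<Longrightarrow> contract x (ce_diff br act \<phi>) = (\<lambda>zs. lie_deriv br act x \<phi> zs - ce_diff br act (contract x \<phi>) zs)"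
  by (rule ext) (simp add: contract_def[of x "ce_diff br act \<phi>"] cartan_formula)

lemma contract_ce_diff_hom:
  assumes "\<forall>v. skew (G v)"
  shows "(\<lambda>v. contract x (ce_diff_hom br actB act G v))
    = (\<lambda>v zs. lie_deriv_hom br actB act x G v zs - ce_diff_hom br actB act (\<lambda>v. contract x (G v)) v zs)"
proof (intro ext)
  fix v zs
  have "contract x (ce_diff br (hom_action actB act) (\<lambda>zs w. G w zs)) zs
      = lie_deriv br (hom_action actB act) x (\<lambda>zs w. G w zs) zs
        - ce_diff br (hom_action actB act) (contract x (\<lambda>zs w. G w zs)) zs"
    using contract_ce_diff[OF skew_flip[OF assms]] by simp
  moreover have "contract x (\<lambda>zs w. G w zs) = (\<lambda>zs w. contract x (G w) zs)"
    by (simp add: contract_def)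
  moreover have "lie_deriv br (hom_action actB act) x (\<lambda>zs w. G w zs) zs v = lie_deriv_hom br actB act x G v zs"
    by (simp add: lie_deriv_def lie_deriv_hom_def hom_action_def sum_fun_apply)
  ultimately show "contract x (ce_diff_hom br actB act G v) zs
      = lie_deriv_hom br actB act x G v zs - ce_diff_hom br actB act (\<lambda>v. contract x (G v)) v zs"
    by (simp add: ce_diff_hom_def contract_def)
qed

lemma ce_diff_shuffle_ext_Cons:
  assumes actB: "additive_action actB" and W: "add_subgroup W" and act: "acts_on W act"
    and \<phi>: "homogeneous p \<phi>" "range \<phi> \<subseteq> W" "skew \<phi>"
    and G: "\<forall>v. homogeneous s (G v)" "additive_on W G" "\<forall>v. skew (G v)"
    and IH1: "ce_diff br actB (shuffle_ext (p - 1) s (contract x \<phi>) G) xs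
      = shuffle_ext p s (ce_diff br act (contract x \<phi>)) G xs
        - isgn (int p) (shuffle_ext (p - 1) (Suc s) (contract x \<phi>) (ce_diff_hom br actB act G) xs)"
    and IH2: "ce_diff br actB (shuffle_ext p (s - 1) \<phi> (\<lambda>v. contract x (G v))) xs
      = shuffle_ext (Suc p) (s - 1) (ce_diff br act \<phi>) (\<lambda>v. contract x (G v)) xs
        + isgn (int p) (shuffle_ext p s \<phi> (ce_diff_hom br actB act (\<lambda>v. contract x (G v))) xs)"
  shows "ce_diff br actB (shuffle_ext p s \<phi> G) (x # xs)
       = shuffle_ext (Suc p) s (ce_diff br act \<phi>) G (x # xs)
         + isgn (int p) (shuffle_ext p (Suc s) \<phi> (ce_diff_hom br actB act G) (x # xs))"
proof -
  let ?xG = "\<lambda>v. contract x (G v)" and ?dG = "ce_diff_hom br actB act"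
  have Gz: "G 0 = (\<lambda>_. 0)" using additive_on_zero[OF G(2) W] .
  have act0: "\<forall>x. act x 0 = 0" using acts_on_zero[OF act] .
  have dGz: "?dG G 0 = (\<lambda>_. 0)" by (rule ce_diff_hom_at_zero[where G = G, OF actB act Gz])
  have "ce_diff br actB (shuffle_ext p s \<phi> G) (x # xs)
      = shuffle_ext p s (lie_deriv br act x \<phi>) G xs
        + shuffle_ext p s \<phi> (lie_deriv_hom br actB act x G) xs
        - (ce_diff br actB (shuffle_ext (p - 1) s (contract x \<phi>) G) xs
           + isgn (int p) (ce_diff br actB (shuffle_ext p (s - 1) \<phi> ?xG) xs))"
    unfolding cartan_formula[OF skew_shuffle_ext[OF W \<phi> G]] contract_shuffle_ext[OF \<phi>(1) G(1) Gz]
      lie_deriv_shuffle_ext[OF actB W act \<phi>(1,2) G(1,2)] ce_diff_add[OF actB] ce_diff_isgn[OF actB] ..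
  also have "\<dots> = shuffle_ext p s (contract x (ce_diff br act \<phi>)) G xs
        + isgn (int (Suc p)) (shuffle_ext (Suc p) (s - 1) (ce_diff br act \<phi>) ?xG xs)
      + isgn (int p) (shuffle_ext (p - 1) (Suc s) (contract x \<phi>) (?dG G) xs
        + isgn (int p) (shuffle_ext p s \<phi> (\<lambda>v. contract x (?dG G v)) xs))"
    unfolding IH1 IH2 contract_ce_diff[OF \<phi>(3)] contract_ce_diff_hom[OF G(3)] shuffle_ext_diff_right
      shuffle_ext_diff_left[OF G(2) W range_lie_deriv[OF W act \<phi>(2)] range_ce_diff[OF W act range_contract[OF \<phi>(2)]]]
    by (simp add: isgn_add isgn_diff isgn_Suc algebra_simps)
  also have "\<dots> = shuffle_ext (Suc p) s (ce_diff br act \<phi>) G (x # xs)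
      + isgn (int p) (shuffle_ext p (Suc s) \<phi> (?dG G) (x # xs))"
    unfolding shuffle_ext_Cons[OF homogeneous_ce_diff[where act = act, OF act0 \<phi>(1)] G(1) Gz]
      shuffle_ext_Cons[OF \<phi>(1) homogeneous_ce_diff_hom[OF actB G(1)] dGz] by simp
  finally show ?thesis .
qed

text \<open>Induction on the argument list: by Cartan's formula it suffices that \<open>\<iota>\<^sub>x\<close> and \<open>L\<^sub>x\<close>
  are (graded) derivations of the shuffle product.\<close>
lemma ce_diff_shuffle_ext:
  assumes actB: "additive_action actB" and W: "add_subgroup W" and act: "acts_on W act"
    and \<phi>: "homogeneous p \<phi>" "range \<phi> \<subseteq> W" "skew \<phi>"
    and G: "\<forall>v. homogeneous s (G v)" "additive_on W G" "\<forall>v. skew (G v)"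
  shows "ce_diff br actB (shuffle_ext p s \<phi> G) xs
       = shuffle_ext (Suc p) s (ce_diff br act \<phi>) G xs
         + isgn (int p) (shuffle_ext p (Suc s) \<phi> (ce_diff_hom br actB act G) xs)"
  using \<phi> G
proof (induct xs arbitrary: p s \<phi> G)
  case Nil
  then show ?case by (simp add: ce_diff_Nil shuffle_ext_Nil)
next
  case (Cons x xs)
  note \<phi> = Cons.prems(1-3) and G = Cons.prems(4-6)
  let ?xG = "\<lambda>v. contract x (G v)" and ?dG = "ce_diff_hom br actB act"
  have Gz: "G 0 = (\<lambda>_. 0)" using additive_on_zero[OF G(2) W] .
  txt \<open>In the degenerate cases \<open>p = 0\<close> and \<open>s = 0\<close> the contracted factor vanishes.\<close>
  have "ce_diff br actB (shuffle_ext (p - 1) s (contract x \<phi>) G) xs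
      = shuffle_ext p s (ce_diff br act (contract x \<phi>)) G xs
        - isgn (int p) (shuffle_ext (p - 1) (Suc s) (contract x \<phi>) (?dG G) xs)"
  proof (cases p)
    case 0
    then have "contract x \<phi> = (\<lambda>_. 0)" using \<phi>(1) by (simp add: homogeneous_0_contract)
    moreover have "shuffle_ext (p - 1) s (\<lambda>_. 0) G = (\<lambda>_. 0)"
      using Gz by (simp add: shuffle_ext_zero_left fun_eq_iff)
    ultimately show ?thesis
      using Gz ce_diff_zero[where act = act, OF acts_on_zero[OF act]] ce_diff_zero[where act = actB]
        ce_diff_hom_at_zero[where G = G, OF actB act Gz] additive_action_zero[OF actB]
      by (simp add: shuffle_ext_zero_left)
  next
    case (Suc m)
    have "ce_diff br actB (shuffle_ext (p - 1) s (contract x \<phi>) G) xs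
        = shuffle_ext (Suc (p - 1)) s (ce_diff br act (contract x \<phi>)) G xs
          + isgn (int (p - 1)) (shuffle_ext (p - 1) (Suc s) (contract x \<phi>) (?dG G) xs)"
      by (rule Cons.hyps[OF homogeneous_contract range_contract skew_contract G]) (use \<phi> in simp_all)
    then show ?thesis using Suc by (simp add: isgn_def)
  qed
  moreover have "ce_diff br actB (shuffle_ext p (s - 1) \<phi> ?xG) xs
      = shuffle_ext (Suc p) (s - 1) (ce_diff br act \<phi>) ?xG xs + isgn (int p) (shuffle_ext p s \<phi> (?dG ?xG) xs)"
  proof (cases s)
    case 0
    then have xG: "?xG = (\<lambda>_ _. 0)" using G(1) by (intro ext) (simp add: homogeneous_0_contract)
    then have "shuffle_ext p (s - 1) \<phi> ?xG = (\<lambda>_. 0)" "shuffle_ext (Suc p) (s - 1) (ce_diff br act \<phi>) ?xG xs = 0"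
      by (simp_all add: shuffle_ext_zero_right fun_eq_iff)
    moreover have "shuffle_ext p s \<phi> (?dG ?xG) xs = 0"
      unfolding xG ce_diff_hom_const_zero[OF actB] by (simp add: shuffle_ext_zero_right)
    ultimately show ?thesis
      using ce_diff_zero[where act = actB] additive_action_zero[OF actB] by simp
  next
    case (Suc r)
    have "ce_diff br actB (shuffle_ext p (s - 1) \<phi> ?xG) xs
        = shuffle_ext (Suc p) (s - 1) (ce_diff br act \<phi>) ?xG xs
          + isgn (int p) (shuffle_ext p (Suc (s - 1)) \<phi> (?dG ?xG) xs)"
      by (rule Cons.hyps[OF \<phi> homogeneous_contract_family additive_on_contract])
        (use G in \<open>simp_all add: skew_contract\<close>)
    then show ?thesis using Suc by simp
  qed
  ultimately show ?case
    by (rule ce_diff_shuffle_ext_Cons[OF actB W act \<phi> G])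
qed

lemma homogeneous_alt_forms: "f \<in> alt_forms sg sw p S \<Longrightarrow> homogeneous p f"
  by (simp add: alt_forms_def homogeneous_def)

lemma range_alt_forms: "f \<in> alt_forms sg sw p S \<Longrightarrow> 0 \<in> S \<Longrightarrow> range f \<subseteq> S"
  by (auto simp: alt_forms_def)

lemma zero_in_alt_forms: "0 \<in> S \<Longrightarrow> (\<And>c. sw c 0 = 0) \<Longrightarrow> (\<lambda>_. 0) \<in> alt_forms sg sw p S"
  by (simp add: alt_forms_def)

lemma skew_alt_forms:
  fixes f :: "'g::ab_group_add list \<Rightarrow> 'w::ab_group_add"
  assumes f: "f \<in> alt_forms sg sw p S"
  shows "skew f"
  unfolding skew_def
proof (intro allI)
  fix as bs :: "'g list" and x y :: 'g
  let ?i = "length as"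
  show "f (as @ x # y # bs) = - f (as @ y # x # bs)"
  proof (cases "length (as @ x # y # bs) = p")
    case False
    then show ?thesis using f by (simp add: alt_forms_def)
  next
    case True
    have add: "\<And>xs i a b. length xs = p \<Longrightarrow> i < p \<Longrightarrow> f (xs[i := a + b]) = f (xs[i := a]) + f (xs[i := b])"
      using f by (simp add: alt_forms_def)
    have alt: "\<And>xs i j. length xs = p \<Longrightarrow> i < j \<Longrightarrow> j < p \<Longrightarrow> xs ! i = xs ! j \<Longrightarrow> f xs = 0"
      using f unfolding alt_forms_def by blast
    have repeated: "f (as @ a # a # bs) = 0" for a
      by (rule alt[of _ ?i "Suc ?i"]) (use True in \<open>auto simp: nth_append\<close>)
    have split1: "f (as @ (x + y) # (x + y) # bs) = f (as @ x # (x + y) # bs) + f (as @ y # (x + y) # bs)"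
      using add[of "as @ (x + y) # (x + y) # bs" ?i x y] True by (simp add: list_update_append)
    have split2: "f (as @ a # (x + y) # bs) = f (as @ a # x # bs) + f (as @ a # y # bs)" for a
      using add[of "as @ a # (x + y) # bs" "Suc ?i" x y] True by (simp add: list_update_append)
    have "0 = f (as @ x # y # bs) + f (as @ y # x # bs)"
      using split1 split2[of x] split2[of y] repeated[of "x + y"] repeated[of x] repeated[of y] by simp
    then show ?thesis by (simp add: eq_neg_iff_add_eq_0)
  qed
qed

text \<open>The degree \<open>k\<close> element \<open>1 \<otimes> v\<close> of \<open>\<Omega>\<^sub>\<gg>(V)\<close>; pairing a generator family with it
  isolates the component on \<open>V\<^sup>k\<close>.\<close>
definition elem_form :: "int \<Rightarrow> 'v::zero \<Rightarrow> int \<Rightarrow> 'g list \<Rightarrow> 'v" where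
  "elem_form k v = (\<lambda>q ys. if q = k \<and> ys = [] then v else 0)"

lemma shuffle_ext_elem_form:
  assumes "G 0 = (\<lambda>_. 0)"
  shows "shuffle_ext (nat (k - q)) m (elem_form k v q) G xs = (if q = k \<and> length xs = m then G v xs else 0)"
proof (cases "q = k")
  case True
  then show ?thesis by (simp add: shuffle_ext_0_left elem_form_def)
qed (use assms in \<open>simp add: elem_form_def shuffle_ext_def\<close>)

definition hom_cochain :: "(int \<Rightarrow> 'v \<Rightarrow> 'g list \<Rightarrow> 'g) \<Rightarrow> int \<Rightarrow> 'g list \<Rightarrow> 'v \<Rightarrow> 'g" where
  "hom_cochain \<gamma> = (\<lambda>q xs v. \<gamma> (- q) v xs)"

lemma hom_cochain_inverse: "hom_cochain (\<lambda>k v xs. c (- k) xs v) = c"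
  by (simp add: hom_cochain_def)

lemma inj_hom_cochain: "inj hom_cochain"
  by (rule inj_on_inverseI[where g = "\<lambda>c k v xs. c (- k) xs v"]) (simp add: hom_cochain_def)

locale nonneg_dg_module =
  fixes sg :: "'k::field \<Rightarrow> 'g::ab_group_add \<Rightarrow> 'g" and br :: "'g \<Rightarrow> 'g \<Rightarrow> 'g"
    and sv :: "'k \<Rightarrow> 'v::ab_group_add \<Rightarrow> 'v" and Vc :: "int \<Rightarrow> 'v set"
    and actV :: "int \<Rightarrow> 'g \<Rightarrow> 'v \<Rightarrow> 'v" and dV :: "int \<Rightarrow> 'v \<Rightarrow> 'v"
  assumes lie: "lie_algebra sg br" and dgm: "dg_module sg br sv Vc actV dV" and nonneg: "nonneg Vc"
begin

lemma additive_bracket: "additive_action br"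
  using lie by (simp add: lie_algebra_def additive_action_def)

lemma sg_zero [simp]: "sg c 0 = 0"
  using lie module.scale_zero_right[of sg] by (simp add: lie_algebra_def module_iff_vector_space)

lemma module_sv: "module sv"
  using dgm by (simp add: dg_module_def module_iff_vector_space)

lemma subspace_Vc: "module.subspace sv (Vc n)"
  using dgm by (simp add: dg_module_def)

lemma add_subgroup_Vc: "add_subgroup (Vc n)"
  using module.subspace_0[OF module_sv subspace_Vc] module.subspace_add[OF module_sv subspace_Vc]
    module.subspace_diff[OF module_sv subspace_Vc] module.subspace_neg[OF module_sv subspace_Vc]
  by (simp add: add_subgroup_def)

lemma zero_in_Vc [simp]: "0 \<in> Vc n"
  using add_subgroup_Vc by (simp add: add_subgroup_def)

lemma actV_add: "v \<in> Vc n \<Longrightarrow> w \<in> Vc n \<Longrightarrow> actV n x (v + w) = actV n x v + actV n x w"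
  using dgm by (simp add: dg_module_def lin_on_def)

lemma actV_zero [simp]: "actV n x 0 = 0"
  using actV_add[of 0 n 0 x] by simp

lemma acts_on_Vc: "acts_on (Vc n) (actV n)"
  using dgm by (simp add: acts_on_def dg_module_def)

lemma dV_in_Vc: "v \<in> Vc n \<Longrightarrow> dV n v \<in> Vc (n + 1)"
  using dgm by (simp add: dg_module_def)

lemma dV_add: "v \<in> Vc n \<Longrightarrow> w \<in> Vc n \<Longrightarrow> dV n (v + w) = dV n v + dV n w"
  using dgm by (simp add: dg_module_def lin_on_def)

lemma dV_zero [simp]: "dV n 0 = 0"
  using dV_add[of 0 n 0] by simp

lemma Vc_neg: "n < 0 \<Longrightarrow> Vc n = {0}"
  using nonneg by (simp add: nonneg_def)

text \<open>\<open>form_map s q G\<close>: \<open>G\<close> is a linear map \<open>V\<^sup>q \<rightarrow> \<wedge>\<^sup>s \<gg>\<^sup>\<or> \<otimes> \<gg>\<close>, extended by zero outside \<open>V\<^sup>q\<close>;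
  the generators of degree \<open>0\<close> and \<open>-1\<close> maps are families of such maps.\<close>
definition form_map :: "nat \<Rightarrow> int \<Rightarrow> ('v \<Rightarrow> 'g list \<Rightarrow> 'g) \<Rightarrow> bool" where
  "form_map s q G \<longleftrightarrow> (\<forall>v. v \<notin> Vc q \<longrightarrow> G v = (\<lambda>_. 0)) \<and> (\<forall>v\<in>Vc q. G v \<in> alt_forms sg sg s UNIV)
     \<and> lin_on sv (\<lambda>c F xs. sg c (F xs)) (Vc q) G"

lemma form_map_const_zero: "form_map s q (\<lambda>_ _. 0)"
  by (simp add: form_map_def zero_in_alt_forms lin_on_def fun_eq_iff)

lemma form_map_at_zero: "form_map s q G \<Longrightarrow> G 0 = (\<lambda>_. 0)"
  unfolding form_map_def lin_on_def using zero_in_Vc[of q] by (auto simp: fun_eq_iff dest!: bspec[of _ _ 0])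

lemma form_map_homogeneous:
  assumes "form_map s q G"
  shows "\<forall>v. homogeneous s (G v)"
proof
  fix v
  show "homogeneous s (G v)"
  proof (cases "v \<in> Vc q")
    case True
    then have "G v \<in> alt_forms sg sg s UNIV" using assms by (simp add: form_map_def)
    then show ?thesis by (rule homogeneous_alt_forms)
  qed (use assms in \<open>simp add: form_map_def\<close>)
qed

lemma form_map_additive_on: "form_map s q G \<Longrightarrow> additive_on (Vc q) G"
  unfolding form_map_def lin_on_def additive_on_def by (auto simp: plus_fun_def)

lemma form_map_skew:
  assumes "form_map s q G"
  shows "\<forall>v. skew (G v)"
proof
  fix v
  show "skew (G v)"
  proof (cases "v \<in> Vc q")
    case True
    then have "G v \<in> alt_forms sg sg s UNIV" using assms by (simp add: form_map_def)
    then show ?thesis by (rule skew_alt_forms)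
  qed (use assms in \<open>simp add: form_map_def skew_def\<close>)
qed

lemma ce_diff_shuffle_ext_form_map:
  assumes "\<phi> \<in> alt_forms sg sv p (Vc q)" and "form_map s q G"
  shows "ce_diff br br (shuffle_ext p s \<phi> G) xs
       = shuffle_ext (Suc p) s (ce_diff br (actV q) \<phi>) G xs
         + isgn (int p) (shuffle_ext p (Suc s) \<phi> (ce_diff_hom br br (actV q) G) xs)"
  by (rule ce_diff_shuffle_ext[OF additive_bracket add_subgroup_Vc acts_on_Vc
        homogeneous_alt_forms[OF assms(1)] range_alt_forms[OF assms(1) zero_in_Vc] skew_alt_forms[OF assms(1)]
        form_map_homogeneous[OF assms(2)] form_map_additive_on[OF assms(2)] form_map_skew[OF assms(2)]])

lemma deg0_gens_form_map: "\<alpha> \<in> deg0_gens sg sv Vc \<Longrightarrow> form_map (nat k) k (\<alpha> k)"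
  by (simp add: deg0_gens_def form_map_def)

lemma degm1_gens_form_map:
  assumes "h \<in> degm1_gens sg sv Vc"
  shows "form_map (nat k - 1) k (h k)"
proof -
  have "nat (k - 1) = nat k - 1" by simp
  with assms show ?thesis unfolding degm1_gens_def form_map_def mem_Collect_eq by (elim allE[of _ k]) simp
qed

lemma deg0_gens_iff: "\<alpha> \<in> deg0_gens sg sv Vc \<longleftrightarrow> (\<forall>k. form_map (nat k) k (\<alpha> k))"
  by (simp add: deg0_gens_def form_map_def)

lemma deg0_gens_neg: "\<alpha> \<in> deg0_gens sg sv Vc \<Longrightarrow> k < 0 \<Longrightarrow> \<alpha> k v = (\<lambda>_. 0)"
  using form_map_at_zero[OF deg0_gens_form_map] Vc_neg by (cases "v \<in> Vc k") (auto simp: deg0_gens_def)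

lemma degm1_gens_nonpos: "h \<in> degm1_gens sg sv Vc \<Longrightarrow> k \<le> 0 \<Longrightarrow> h k v = (\<lambda>_. 0)"
  by (simp add: degm1_gens_def)

lemma deg0_gens_at_zero: "\<alpha> \<in> deg0_gens sg sv Vc \<Longrightarrow> \<alpha> q 0 = (\<lambda>_. 0)"
  by (rule form_map_at_zero[OF deg0_gens_form_map])

lemma omega_component: "f \<in> omega sg sv Vc n \<Longrightarrow> q \<le> n \<Longrightarrow> f q \<in> alt_forms sg sv (nat (n - q)) (Vc q)"
  by (simp add: omega_def)

lemma omega_above: "f \<in> omega sg sv Vc n \<Longrightarrow> n < q \<Longrightarrow> f q = (\<lambda>_. 0)"
  by (simp add: omega_def)

lemma omega_range: "f \<in> omega sg sv Vc n \<Longrightarrow> range (f q) \<subseteq> Vc q"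
  by (cases "q \<le> n") (auto simp: omega_above dest: omega_component range_alt_forms[OF _ zero_in_Vc])

lemma omega_neg: "f \<in> omega sg sv Vc n \<Longrightarrow> q < 0 \<Longrightarrow> f q = (\<lambda>_. 0)"
  using omega_range[of f n q] Vc_neg[of q] by auto

lemma elem_form_omega: "v \<in> Vc k \<Longrightarrow> elem_form k v \<in> omega sg sv Vc k"
  using module.scale_zero_right[OF module_sv]
  by (auto simp: omega_def alt_forms_def elem_form_def)

lemma shuffle_ext_dtot:
  assumes f: "f \<in> omega sg sv Vc n" and q: "q \<le> n + 1" and G: "form_map m q G"
  shows "shuffle_ext p m (dtot br actV dV n f q) G xs
    = shuffle_ext p m (ce_diff br (actV q) (f q)) G xs
      + isgn (n + 1 - q) (shuffle_ext p m (\<lambda>ys. dV (q - 1) (f (q - 1) ys)) G xs)"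
proof -
  have d_range: "range (\<lambda>ys. dV (q - 1) (f (q - 1) ys)) \<subseteq> Vc q"
    using dV_in_Vc omega_range[OF f, of "q - 1"] by fastforce
  have "range (\<lambda>ys. isgn (n + 1 - q) (dV (q - 1) (f (q - 1) ys))) \<subseteq> Vc q"
    using d_range add_subgroup_isgn[OF add_subgroup_Vc] by blast
  then show ?thesis
    using q unfolding dtot_def
    by (simp add: shuffle_ext_add_left[OF form_map_additive_on[OF G]
          range_ce_diff[OF add_subgroup_Vc acts_on_Vc omega_range[OF f]]]
        shuffle_ext_isgn_left[OF form_map_additive_on[OF G] add_subgroup_Vc d_range])
qed

lemma sum_shuffle_ext_dtot:
  assumes f: "f \<in> omega sg sv Vc n" and G: "\<forall>q. form_map (m q) q (G q)"
  shows "(\<Sum>q\<in>{0..n + 1}. isgn (e q) (shuffle_ext (nat (n + 1 - q)) (m q) (dtot br actV dV n f q) (G q) xs))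
    = (\<Sum>q\<in>{0..n}. isgn (e q) (shuffle_ext (nat (n + 1 - q)) (m q) (ce_diff br (actV q) (f q)) (G q) xs))
      + (\<Sum>q\<in>{0..n}. isgn (e (q + 1) + (n - q))
           (shuffle_ext (nat (n - q)) (m (q + 1)) (f q) (\<lambda>v. G (q + 1) (dV q v)) xs))"
proof -
  have Gz: "G q 0 = (\<lambda>_. 0)" for q using form_map_at_zero G by blast
  have "(\<Sum>q\<in>{0..n + 1}. isgn (e q) (shuffle_ext (nat (n + 1 - q)) (m q) (dtot br actV dV n f q) (G q) xs))
    = (\<Sum>q\<in>{0..n + 1}. isgn (e q) (shuffle_ext (nat (n + 1 - q)) (m q) (ce_diff br (actV q) (f q)) (G q) xs))
      + (\<Sum>q\<in>{0..n + 1}. isgn (e q + (n + 1 - q))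
           (shuffle_ext (nat (n + 1 - q)) (m q) (\<lambda>ys. dV (q - 1) (f (q - 1) ys)) (G q) xs))"
    using G by (simp add: shuffle_ext_dtot[OF f] sum.distrib isgn_add isgn_isgn)
  also have "(\<Sum>q\<in>{0..n + 1}. isgn (e q) (shuffle_ext (nat (n + 1 - q)) (m q) (ce_diff br (actV q) (f q)) (G q) xs))
    = (\<Sum>q\<in>{0..n}. isgn (e q) (shuffle_ext (nat (n + 1 - q)) (m q) (ce_diff br (actV q) (f q)) (G q) xs))"
    using omega_above[OF f, of "n + 1"] Gz
    by (intro sum_int_drop_top) (simp add: ce_diff_zero shuffle_ext_zero_left)
  also have "(\<Sum>q\<in>{0..n + 1}. isgn (e q + (n + 1 - q))
           (shuffle_ext (nat (n + 1 - q)) (m q) (\<lambda>ys. dV (q - 1) (f (q - 1) ys)) (G q) xs))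
    = (\<Sum>q\<in>{0..n}. isgn (e (q + 1) + (n - q))
           (shuffle_ext (nat (n - q)) (m (q + 1)) (f q) (\<lambda>v. G (q + 1) (dV q v)) xs))"
    using omega_neg[OF f, of "-1"] Gz
    by (subst sum_int_shift) (simp_all add: shuffle_ext_zero_left shuffle_ext_comp_left)
  finally show ?thesis .
qed

text \<open>The component of \<open>\<alpha> \<circ> d\<^sub>t\<^sub>o\<^sub>t - d\<^sub>C\<^sub>E \<circ> \<alpha>\<close> on \<open>V\<^sup>q\<close>; up to sign it is \<open>d\<^sub>t\<^sub>o\<^sub>t c(\<alpha>)\<close>.\<close>
definition LP_defect :: "(int \<Rightarrow> 'v \<Rightarrow> 'g list \<Rightarrow> 'g) \<Rightarrow> int \<Rightarrow> 'v \<Rightarrow> 'g list \<Rightarrow> 'g" where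
  "LP_defect \<alpha> q = (\<lambda>v ys. \<alpha> (q + 1) (dV q v) ys - ce_diff_hom br br (actV q) (\<alpha> q) v ys)"

text \<open>The component of \<open>d\<^sub>C\<^sub>E \<circ> h + h \<circ> d\<^sub>t\<^sub>o\<^sub>t\<close> on \<open>V\<^sup>q\<close>.\<close>
definition homotopy_bracket :: "(int \<Rightarrow> 'v \<Rightarrow> 'g list \<Rightarrow> 'g) \<Rightarrow> int \<Rightarrow> 'v \<Rightarrow> 'g list \<Rightarrow> 'g" where
  "homotopy_bracket h q = (\<lambda>v ys. ce_diff_hom br br (actV q) (h q) v ys + h (q + 1) (dV q v) ys)"

lemma ext0_dtot_minus_ce_diff:
  assumes \<alpha>: "\<alpha> \<in> deg0_gens sg sv Vc" and f: "f \<in> omega sg sv Vc n"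
  shows "ext0 \<alpha> (n + 1) (dtot br actV dV n f) xs - ce_diff br br (ext0 \<alpha> n f) xs
       = (\<Sum>q\<in>{0..n}. isgn (n - q) (shuffle_ext (nat (n - q)) (Suc (nat q)) (f q) (LP_defect \<alpha> q) xs))"
proof -
  let ?A = "\<lambda>q. shuffle_ext (nat (n + 1 - q)) (nat q) (ce_diff br (actV q) (f q)) (\<alpha> q) xs"
  let ?dV = "\<lambda>q. shuffle_ext (nat (n - q)) (Suc (nat q)) (f q) (\<lambda>v. \<alpha> (q + 1) (dV q v)) xs"
  let ?d\<alpha> = "\<lambda>q. shuffle_ext (nat (n - q)) (Suc (nat q)) (f q) (ce_diff_hom br br (actV q) (\<alpha> q)) xs"
  have G: "\<forall>q. form_map (nat q) q (\<alpha> q)" using deg0_gens_form_map[OF \<alpha>] by blast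
  have "ext0 \<alpha> (n + 1) (dtot br actV dV n f) xs = (\<Sum>q\<in>{0..n}. ?A q) + (\<Sum>q\<in>{0..n}. isgn (n - q) (?dV q))"
    using sum_shuffle_ext_dtot[OF f G, of "\<lambda>_. 0" xs]
    by (simp add: ext0_def nat_add_distrib)
  moreover have "ce_diff br br (ext0 \<alpha> n f) xs = (\<Sum>q\<in>{0..n}. ?A q + isgn (n - q) (?d\<alpha> q))"
    unfolding ext0_def ce_diff_sum[OF additive_bracket]
  proof (intro sum.cong refl)
    fix q assume "q \<in> {0..n}"
    then have "Suc (nat (n - q)) = nat (n + 1 - q)" "int (nat (n - q)) = n - q" by auto
    then show "ce_diff br br (shuffle_ext (nat (n - q)) (nat q) (f q) (\<alpha> q)) xs = ?A q + isgn (n - q) (?d\<alpha> q)"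
      using \<open>q \<in> {0..n}\<close> by (simp add: ce_diff_shuffle_ext_form_map[OF omega_component[OF f] G[rule_format]])
  qed
  ultimately show ?thesis
    by (simp add: sum.distrib sum_subtractf LP_defect_def shuffle_ext_diff_right isgn_diff)
qed

lemma ce_diff_ext1_plus_ext1_dtot:
  assumes h: "h \<in> degm1_gens sg sv Vc" and f: "f \<in> omega sg sv Vc n"
  shows "ce_diff br br (ext1 h n f) xs + ext1 h (n + 1) (dtot br actV dV n f) xs
       = (\<Sum>q\<in>{0..n}. shuffle_ext (nat (n - q)) (nat q) (f q) (homotopy_bracket h q) xs)"
proof -
  let ?A = "\<lambda>q. shuffle_ext (nat (n + 1 - q)) (nat q - 1) (ce_diff br (actV q) (f q)) (h q) xs"
  let ?dV = "\<lambda>q. shuffle_ext (nat (n - q)) (nat q) (f q) (\<lambda>v. h (q + 1) (dV q v)) xs"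
  let ?dh = "\<lambda>q. shuffle_ext (nat (n - q)) (nat q) (f q) (ce_diff_hom br br (actV q) (h q)) xs"
  have G: "\<forall>q. form_map (nat q - 1) q (h q)" using degm1_gens_form_map[OF h] by blast
  have E1: "ext1 h (n + 1) (dtot br actV dV n f) xs = (\<Sum>q\<in>{0..n}. isgn (n + 1 - q) (?A q) + ?dV q)"
    unfolding ext1_def sum_shuffle_ext_dtot[OF f G] sum.distrib
  proof (intro arg_cong2[where f = "(+)"] sum.cong refl)
    fix q assume "q \<in> {0..n}"
    then have "nat (q + 1) - 1 = nat q" "even (n + 1 - (q + 1) + (n - q))" by auto
    then show "isgn (n + 1 - (q + 1) + (n - q)) (shuffle_ext (nat (n - q)) (nat (q + 1) - 1) (f q)
        (\<lambda>v. h (q + 1) (dV q v)) xs) = ?dV q"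
      by (simp add: isgn_def)
  qed
  have E2: "ce_diff br br (ext1 h n f) xs = (\<Sum>q\<in>{0..n}. isgn (n - q) (?A q) + ?dh q)"
    unfolding ext1_def ce_diff_sum[OF additive_bracket] ce_diff_isgn[OF additive_bracket]
  proof (intro sum.cong refl)
    fix q assume q: "q \<in> {0..n}"
    then have "Suc (nat (n - q)) = nat (n + 1 - q)" "int (nat (n - q)) = n - q" by auto
    moreover have "shuffle_ext (nat (n - q)) (Suc (nat q - 1)) (f q) (ce_diff_hom br br (actV q) (h q)) xs = ?dh q"
    proof (cases "q = 0")
      case True
      then have "h q = (\<lambda>_ _. 0)" using degm1_gens_nonpos[OF h] by (simp add: fun_eq_iff)
      then show ?thesis by (simp add: ce_diff_hom_const_zero[OF additive_bracket] shuffle_ext_zero_right)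
    qed (use q in \<open>simp add: Suc_diff_1\<close>)
    moreover have "q \<le> n" using q by simp
    ultimately show "isgn (n - q) (ce_diff br br (shuffle_ext (nat (n - q)) (nat q - 1) (f q) (h q)) xs)
        = isgn (n - q) (?A q) + ?dh q"
      unfolding ce_diff_shuffle_ext_form_map[OF omega_component[OF f \<open>q \<le> n\<close>] G[rule_format]]
      by (simp add: isgn_add)
  qed
  show ?thesis
    unfolding E1 E2 sum.distrib[symmetric] homotopy_bracket_def shuffle_ext_add_right
    by (intro sum.cong refl) (simp add: isgn_def)
qed

lemma LP_defect_at_zero:
  assumes "\<alpha> \<in> deg0_gens sg sv Vc"
  shows "LP_defect \<alpha> q 0 = (\<lambda>_. 0)"
  using ce_diff_hom_at_zero[where G = "\<alpha> q", OF additive_bracket acts_on_Vc deg0_gens_at_zero[OF assms]]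
  by (simp add: LP_defect_def deg0_gens_at_zero[OF assms] fun_eq_iff)

lemma homogeneous_LP_defect:
  assumes "\<alpha> \<in> deg0_gens sg sv Vc" "0 \<le> k"
  shows "homogeneous (Suc (nat k)) (LP_defect \<alpha> k v)"
  using form_map_homogeneous[OF deg0_gens_form_map[OF assms(1), of "k + 1"]]
    homogeneous_ce_diff_hom[OF additive_bracket form_map_homogeneous[OF deg0_gens_form_map[OF assms(1)]]]
    assms(2)
  by (simp add: homogeneous_def LP_defect_def nat_add_distrib)

lemma homotopy_bracket_at_zero:
  assumes "h \<in> degm1_gens sg sv Vc"
  shows "homotopy_bracket h q 0 = (\<lambda>_. 0)"
  using ce_diff_hom_at_zero[where G = "h q", OF additive_bracket acts_on_Vc form_map_at_zero[OF degm1_gens_form_map[OF assms]]]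
    form_map_at_zero[OF degm1_gens_form_map[OF assms]]
  by (simp add: homotopy_bracket_def fun_eq_iff)

lemma homogeneous_homotopy_bracket:
  assumes h: "h \<in> degm1_gens sg sv Vc" and k: "0 \<le> k"
  shows "homogeneous (nat k) (homotopy_bracket h k v)"
proof -
  have "homogeneous (nat k) (ce_diff_hom br br (actV k) (h k) v)"
  proof (cases "k = 0")
    case True
    then have "h k = (\<lambda>_ _. 0)" using degm1_gens_nonpos[OF h] by (simp add: fun_eq_iff)
    then show ?thesis by (simp add: ce_diff_hom_const_zero[OF additive_bracket])
  next
    case False
    then show ?thesis
      using homogeneous_ce_diff_hom[OF additive_bracket form_map_homogeneous[OF degm1_gens_form_map[OF h]]] k
      by (metis Suc_pred' nat_0_iff not_le not_gr0 order_antisym)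
  qed
  moreover have "homogeneous (nat k) (h (k + 1) (dV k v))"
    using form_map_homogeneous[OF degm1_gens_form_map[OF h, of "k + 1"]] k by (simp add: nat_add_distrib)
  ultimately show ?thesis
    by (simp add: homogeneous_def homotopy_bracket_def)
qed

subsection \<open>The complex \<open>\<Omega>\<^sub>\<gg>(Hom(V, \<gg>))\<close>\<close>

lemma alt_forms_Hom_iff_pointwise:
  "(\<lambda>xs v. \<gamma> v xs) \<in> alt_forms sg (Hom_scale sg) P (Hom_c sg sv Vc (- k)) \<longleftrightarrow>
     (\<forall>v. \<gamma> v \<in> alt_forms sg sg P UNIV) \<and> (\<forall>xs. lin_on sv sg (Vc k) (\<lambda>v. \<gamma> v xs))
     \<and> (\<forall>v xs. v \<notin> Vc k \<longrightarrow> \<gamma> v xs = 0)"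
proof
  assume a: "(\<lambda>xs v. \<gamma> v xs) \<in> alt_forms sg (Hom_scale sg) P (Hom_c sg sv Vc (- k))"
  then have "\<forall>v. \<gamma> v \<in> alt_forms sg sg P UNIV"
    unfolding alt_forms_def Hom_scale_def by (simp add: fun_eq_iff)
  moreover have "lin_on sv sg (Vc k) (\<lambda>v. \<gamma> v xs) \<and> (\<forall>v. v \<notin> Vc k \<longrightarrow> \<gamma> v xs = 0)" for xs
    using a by (cases "length xs = P") (auto simp: alt_forms_def Hom_c_def fun_eq_iff lin_on_def)
  ultimately show "(\<forall>v. \<gamma> v \<in> alt_forms sg sg P UNIV) \<and> (\<forall>xs. lin_on sv sg (Vc k) (\<lambda>v. \<gamma> v xs))
     \<and> (\<forall>v xs. v \<notin> Vc k \<longrightarrow> \<gamma> v xs = 0)" by blast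
next
  assume "(\<forall>v. \<gamma> v \<in> alt_forms sg sg P UNIV) \<and> (\<forall>xs. lin_on sv sg (Vc k) (\<lambda>v. \<gamma> v xs))
     \<and> (\<forall>v xs. v \<notin> Vc k \<longrightarrow> \<gamma> v xs = 0)"
  then show "(\<lambda>xs v. \<gamma> v xs) \<in> alt_forms sg (Hom_scale sg) P (Hom_c sg sv Vc (- k))"
    unfolding alt_forms_def Hom_c_def Hom_scale_def by (simp add: fun_eq_iff)
qed

lemma alt_forms_Hom_iff:
  "(\<lambda>xs v. \<gamma> v xs) \<in> alt_forms sg (Hom_scale sg) P (Hom_c sg sv Vc (- k)) \<longleftrightarrow> form_map P k \<gamma>"
proof -
  have "(\<forall>v. \<gamma> v \<in> alt_forms sg sg P UNIV) \<longleftrightarrow> (\<forall>v\<in>Vc k. \<gamma> v \<in> alt_forms sg sg P UNIV)"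
    if "\<forall>v xs. v \<notin> Vc k \<longrightarrow> \<gamma> v xs = 0"
  proof -
    have "\<gamma> v \<in> alt_forms sg sg P UNIV" if "v \<notin> Vc k" for v
      using \<open>\<forall>v xs. v \<notin> Vc k \<longrightarrow> \<gamma> v xs = 0\<close> that zero_in_alt_forms[of UNIV sg sg P]
      by (simp add: fun_eq_iff[symmetric])
    then show ?thesis by blast
  qed
  moreover have "(\<forall>xs. lin_on sv sg (Vc k) (\<lambda>v. \<gamma> v xs)) \<longleftrightarrow> lin_on sv (\<lambda>c F xs. sg c (F xs)) (Vc k) \<gamma>"
    by (auto simp: lin_on_def fun_eq_iff)
  ultimately show ?thesis
    unfolding alt_forms_Hom_iff_pointwise form_map_def by (auto simp: fun_eq_iff)
qed

lemma omega_hom_cochain_iff: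
  "hom_cochain \<gamma> \<in> omega sg (Hom_scale sg) (Hom_c sg sv Vc) n \<longleftrightarrow>
     (\<forall>k. (- n \<le> k \<longrightarrow> form_map (nat (n + k)) k (\<gamma> k)) \<and> (k < - n \<longrightarrow> (\<forall>v. \<gamma> k v = (\<lambda>_. 0))))"
proof -
  have "hom_cochain \<gamma> \<in> omega sg (Hom_scale sg) (Hom_c sg sv Vc) n \<longleftrightarrow>
     (\<forall>q. (q \<le> n \<longrightarrow> form_map (nat (n - q)) (- q) (\<gamma> (- q))) \<and> (n < q \<longrightarrow> (\<forall>v. \<gamma> (- q) v = (\<lambda>_. 0))))"
    using alt_forms_Hom_iff[where k = "- _", simplified]
    by (simp add: omega_def hom_cochain_def fun_eq_iff) blast
  also have "\<dots> \<longleftrightarrow> (\<forall>k. (- n \<le> k \<longrightarrow> form_map (nat (n + k)) k (\<gamma> k)) \<and> (k < - n \<longrightarrow> (\<forall>v. \<gamma> k v = (\<lambda>_. 0))))"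
  proof (intro iffI allI)
    fix k
    assume "\<forall>q. (q \<le> n \<longrightarrow> form_map (nat (n - q)) (- q) (\<gamma> (- q))) \<and> (n < q \<longrightarrow> (\<forall>v. \<gamma> (- q) v = (\<lambda>_. 0)))"
    then show "(- n \<le> k \<longrightarrow> form_map (nat (n + k)) k (\<gamma> k)) \<and> (k < - n \<longrightarrow> (\<forall>v. \<gamma> k v = (\<lambda>_. 0)))"
      by (auto dest: spec[of _ "- k"])
  next
    fix q
    assume "\<forall>k. (- n \<le> k \<longrightarrow> form_map (nat (n + k)) k (\<gamma> k)) \<and> (k < - n \<longrightarrow> (\<forall>v. \<gamma> k v = (\<lambda>_. 0)))"
    then show "(q \<le> n \<longrightarrow> form_map (nat (n - q)) (- q) (\<gamma> (- q))) \<and> (n < q \<longrightarrow> (\<forall>v. \<gamma> (- q) v = (\<lambda>_. 0)))"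
      by (auto dest: spec[of _ "- q"])
  qed
  finally show ?thesis .
qed

lemma deg0_gens_iff_omega:
  "\<alpha> \<in> deg0_gens sg sv Vc \<longleftrightarrow> hom_cochain \<alpha> \<in> omega sg (Hom_scale sg) (Hom_c sg sv Vc) 0"
proof
  assume "\<alpha> \<in> deg0_gens sg sv Vc"
  then show "hom_cochain \<alpha> \<in> omega sg (Hom_scale sg) (Hom_c sg sv Vc) 0"
    unfolding omega_hom_cochain_iff using deg0_gens_form_map deg0_gens_neg by simp
next
  assume \<alpha>: "hom_cochain \<alpha> \<in> omega sg (Hom_scale sg) (Hom_c sg sv Vc) 0"
  have "form_map (nat k) k (\<alpha> k)" for k
  proof (cases "0 \<le> k")
    case False
    then have "\<alpha> k = (\<lambda>_ _. 0)" using \<alpha> unfolding omega_hom_cochain_iff by (simp add: fun_eq_iff)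
    then show ?thesis using form_map_const_zero by simp
  qed (use \<alpha> in \<open>simp add: omega_hom_cochain_iff\<close>)
  then show "\<alpha> \<in> deg0_gens sg sv Vc" unfolding deg0_gens_iff ..
qed

lemma degm1_gens_iff_omega:
  "h \<in> degm1_gens sg sv Vc \<longleftrightarrow> hom_cochain h \<in> omega sg (Hom_scale sg) (Hom_c sg sv Vc) (-1)"
proof
  assume h: "h \<in> degm1_gens sg sv Vc"
  have "nat (-1 + k) = nat k - 1" for k by simp
  then show "hom_cochain h \<in> omega sg (Hom_scale sg) (Hom_c sg sv Vc) (-1)"
    unfolding omega_hom_cochain_iff using degm1_gens_form_map[OF h] degm1_gens_nonpos[OF h] by simp
next
  assume h: "hom_cochain h \<in> omega sg (Hom_scale sg) (Hom_c sg sv Vc) (-1)"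
  have "form_map (nat (k - 1)) k (h k)" for k
  proof (cases "1 \<le> k")
    case False
    then have "h k = (\<lambda>_ _. 0)" using h unfolding omega_hom_cochain_iff by (simp add: fun_eq_iff)
    then show ?thesis using form_map_const_zero by simp
  qed (use h in \<open>simp add: omega_hom_cochain_iff add.commute\<close>)
  moreover have "k \<le> 0 \<Longrightarrow> h k v = (\<lambda>_. 0)" for k v
    using h unfolding omega_hom_cochain_iff by simp
  ultimately show "h \<in> degm1_gens sg sv Vc"
    unfolding degm1_gens_def form_map_def by blast
qed

lemma cmap_eq_hom_cochain: "\<alpha> \<in> deg0_gens sg sv Vc \<Longrightarrow> cmap \<alpha> = hom_cochain \<alpha>"
  using deg0_gens_neg by (auto simp: cmap_def hom_cochain_def fun_eq_iff)

lemma dtot_hom_cochain: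
  assumes "\<forall>k. form_map (m k) k (\<gamma> k)"
  shows "dtot br (Hom_act br Vc actV) (Hom_d Vc dV) n (hom_cochain \<gamma>) q xs v
    = (if q \<le> n + 1 \<and> v \<in> Vc (- q) then ce_diff_hom br br (actV (- q)) (\<gamma> (- q)) v xs
         + isgn (n + 1) (\<gamma> (1 - q) (dV (- q) v) xs) else 0)"
proof (cases "q \<le> n + 1")
  case True
  have "isgn (n + 1 - q) (Hom_d Vc dV (q - 1) (hom_cochain \<gamma> (q - 1) xs)) v
      = (if v \<in> Vc (- q) then isgn (n + 1) (\<gamma> (1 - q) (dV (- q) v) xs) else 0)"
    by (simp add: Hom_d_def hom_cochain_def isgn_fun_apply isgn_isgn)
  moreover have "ce_diff br (Hom_act br Vc actV q) (hom_cochain \<gamma> q) xs v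
      = (if v \<in> Vc (- q) then ce_diff_hom br br (actV (- q)) (\<gamma> (- q)) v xs else 0)"
  proof (cases "v \<in> Vc (- q)")
    case True
    have "ce_diff br (Hom_act br Vc actV q) (hom_cochain \<gamma> q) xs v
        = ce_diff br (hom_action br (actV (- q))) (hom_cochain \<gamma> q) xs v"
      by (rule ce_diff_apply_cong) (simp add: Hom_act_def hom_action_def True)
    then show ?thesis using True by (simp add: ce_diff_hom_def hom_cochain_def)
  next
    case False
    then have "hom_cochain \<gamma> q zs v = 0" for zs
      using assms by (simp add: hom_cochain_def form_map_def)
    then show ?thesis using False
      by (simp add: ce_diff_def sum_fun_apply isgn_fun_apply Hom_act_def)
  qed
  ultimately show ?thesis using True by (simp add: dtot_def)
qed (simp add: dtot_def)

text \<open>A family \<open>D\<close> of homogeneous maps vanishes on every \<open>V\<^sup>k\<close> iff its pairings with all of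
  \<open>\<Omega>\<^sub>\<gg>(V)\<close> vanish: one direction tests against \<open>elem_form k v\<close>.\<close>
lemma shuffle_sums_vanish_iff:
  assumes D0: "\<forall>q. D q 0 = (\<lambda>_. 0)" and D: "\<forall>k\<ge>0. \<forall>v. homogeneous (m k) (D k v)" and \<sigma>: "\<forall>k. \<sigma> k k = 0"
  shows "(\<forall>n. \<forall>f\<in>omega sg sv Vc n. \<forall>xs.
            (\<Sum>q\<in>{0..n}. isgn (\<sigma> n q) (shuffle_ext (nat (n - q)) (m q) (f q) (D q) xs)) = 0)
     \<longleftrightarrow> (\<forall>k\<ge>0. \<forall>v\<in>Vc k. D k v = (\<lambda>_. 0))"
proof
  assume sums: "\<forall>n. \<forall>f\<in>omega sg sv Vc n. \<forall>xs.
            (\<Sum>q\<in>{0..n}. isgn (\<sigma> n q) (shuffle_ext (nat (n - q)) (m q) (f q) (D q) xs)) = 0"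
  show "\<forall>k\<ge>0. \<forall>v\<in>Vc k. D k v = (\<lambda>_. 0)"
  proof (intro allI impI ballI ext)
    fix k v xs assume k: "0 \<le> k" and v: "v \<in> Vc k"
    have "(\<Sum>q\<in>{0..k}. isgn (\<sigma> k q) (shuffle_ext (nat (k - q)) (m q) (elem_form k v q) (D q) xs))
        = (\<Sum>q\<in>{0..k}. if q = k then (if length xs = m k then D k v xs else 0) else 0)"
      using D0 \<sigma> by (intro sum.cong refl) (simp add: shuffle_ext_elem_form)
    also have "\<dots> = (if length xs = m k then D k v xs else 0)"
      using k by simp
    finally show "D k v xs = 0"
      using sums elem_form_omega[OF v] homogeneousD[of "m k" "D k v" xs] D k by (cases "length xs = m k") auto
  qed
next
  assume "\<forall>k\<ge>0. \<forall>v\<in>Vc k. D k v = (\<lambda>_. 0)"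
  then have "shuffle_ext (nat (n - q)) (m q) (f q) (D q) xs = 0"
    if "f \<in> omega sg sv Vc n" "q \<in> {0..n}" for n f q xs
    using that omega_range[of f n q] by (intro shuffle_ext_zero_on_range) (auto simp: image_subset_iff)
  then show "\<forall>n. \<forall>f\<in>omega sg sv Vc n. \<forall>xs.
            (\<Sum>q\<in>{0..n}. isgn (\<sigma> n q) (shuffle_ext (nat (n - q)) (m q) (f q) (D q) xs)) = 0"
    by simp
qed

lemma LP_structures_iff:
  "\<alpha> \<in> LP_structures sg br sv Vc actV dV \<longleftrightarrow>
     \<alpha> \<in> deg0_gens sg sv Vc \<and> (\<forall>k\<ge>0. \<forall>v\<in>Vc k. LP_defect \<alpha> k v = (\<lambda>_. 0))"
proof (cases "\<alpha> \<in> deg0_gens sg sv Vc")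
  case True
  have "ext0 \<alpha> (n + 1) (dtot br actV dV n f) = ce_diff br br (ext0 \<alpha> n f) \<longleftrightarrow>
      (\<forall>xs. (\<Sum>q\<in>{0..n}. isgn (n - q) (shuffle_ext (nat (n - q)) (Suc (nat q)) (f q) (LP_defect \<alpha> q) xs)) = 0)"
    if "f \<in> omega sg sv Vc n" for n f
    unfolding ext0_dtot_minus_ce_diff[OF True that, symmetric] by (simp add: fun_eq_iff)
  then have "\<alpha> \<in> LP_structures sg br sv Vc actV dV \<longleftrightarrow> (\<forall>n. \<forall>f\<in>omega sg sv Vc n. \<forall>xs.
      (\<Sum>q\<in>{0..n}. isgn (n - q) (shuffle_ext (nat (n - q)) (Suc (nat q)) (f q) (LP_defect \<alpha> q) xs)) = 0)"
    using True unfolding LP_structures_def by blast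
  also have "\<dots> \<longleftrightarrow> (\<forall>k\<ge>0. \<forall>v\<in>Vc k. LP_defect \<alpha> k v = (\<lambda>_. 0))"
    using LP_defect_at_zero[OF True] homogeneous_LP_defect[OF True]
    by (intro shuffle_sums_vanish_iff[where \<sigma> = "(-)" and m = "\<lambda>q. Suc (nat q)"]) simp_all
  finally show ?thesis using True by blast
qed (simp add: LP_structures_def)

lemma cmap_cocycle_iff:
  assumes \<alpha>: "\<alpha> \<in> deg0_gens sg sv Vc"
  shows "cmap \<alpha> \<in> cocycles0 sg br sv Vc actV dV \<longleftrightarrow> (\<forall>k\<ge>0. \<forall>v\<in>Vc k. LP_defect \<alpha> k v = (\<lambda>_. 0))"
proof -
  have "dtot br (Hom_act br Vc actV) (Hom_d Vc dV) 0 (cmap \<alpha>) q xs v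
      = (if q \<le> 0 \<and> v \<in> Vc (- q) then - LP_defect \<alpha> (- q) v xs else 0)" for q xs v
  proof -
    txt \<open>The component \<open>q = 1\<close> lives on \<open>V\<^sup>-\<^sup>1 = 0\<close>.\<close>
    have "ce_diff_hom br br (actV (- q)) (\<alpha> (- q)) v xs = \<alpha> (1 - q) (dV (- q) v) xs"
      if "v \<in> Vc (- q)" "\<not> q \<le> 0" "q \<le> 1"
    proof -
      have q: "q = 1" using that by simp
      have "v \<in> Vc (-1)" using that(1) unfolding q .
      then have "v = 0" using Vc_neg[of "-1"] by simp
      with q show ?thesis
        using LP_defect_at_zero[OF \<alpha>, of "-1"] by (simp add: LP_defect_def fun_eq_iff)
    qed
    then show ?thesis
      unfolding cmap_eq_hom_cochain[OF \<alpha>] dtot_hom_cochain[OF deg0_gens_iff[THEN iffD1, OF \<alpha>]]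
      by (auto simp: LP_defect_def isgn_def)
  qed
  moreover have "cmap \<alpha> \<in> omega sg (Hom_scale sg) (Hom_c sg sv Vc) 0"
    using deg0_gens_iff_omega \<alpha> cmap_eq_hom_cochain by simp
  ultimately have "cmap \<alpha> \<in> cocycles0 sg br sv Vc actV dV \<longleftrightarrow>
      (\<forall>q xs v. q \<le> 0 \<and> v \<in> Vc (- q) \<longrightarrow> LP_defect \<alpha> (- q) v xs = 0)"
    by (auto simp: cocycles0_def fun_eq_iff)
  also have "\<dots> \<longleftrightarrow> (\<forall>k\<ge>0. \<forall>v\<in>Vc k. LP_defect \<alpha> k v = (\<lambda>_. 0))"
  proof (intro iffI allI impI ballI ext)
    fix k v xs
    assume "\<forall>q xs v. q \<le> 0 \<and> v \<in> Vc (- q) \<longrightarrow> LP_defect \<alpha> (- q) v xs = 0" "0 \<le> k" "v \<in> Vc k"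
    then show "LP_defect \<alpha> k v xs = 0" by (metis minus_minus neg_le_0_iff_le)
  qed (simp add: fun_eq_iff)
  finally show ?thesis .
qed

lemma ext0_diff:
  "ext0 \<alpha>' n f xs - ext0 \<alpha> n f xs
     = (\<Sum>q\<in>{0..n}. shuffle_ext (nat (n - q)) (nat q) (f q) (\<lambda>v ys. \<alpha>' q v ys - \<alpha> q v ys) xs)"
  by (simp add: ext0_def sum_subtractf shuffle_ext_diff_right)

lemma LP_homotopic_iff:
  assumes \<alpha>: "\<alpha> \<in> deg0_gens sg sv Vc" and \<alpha>': "\<alpha>' \<in> deg0_gens sg sv Vc"
  shows "LP_homotopic sg br sv Vc actV dV \<alpha> \<alpha>' \<longleftrightarrow>
    (\<exists>h\<in>degm1_gens sg sv Vc. \<forall>k\<ge>0. \<forall>v\<in>Vc k. homotopy_bracket h k v = (\<lambda>ys. \<alpha>' k v ys - \<alpha> k v ys))"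
proof -
  let ?D = "\<lambda>h q v ys. homotopy_bracket h q v ys - (\<alpha>' q v ys - \<alpha> q v ys)"
  have "(\<forall>n. \<forall>f\<in>omega sg sv Vc n. \<forall>xs. ext0 \<alpha>' n f xs - ext0 \<alpha> n f xs
        = ce_diff br br (ext1 h n f) xs + ext1 h (n + 1) (dtot br actV dV n f) xs)
    \<longleftrightarrow> (\<forall>k\<ge>0. \<forall>v\<in>Vc k. homotopy_bracket h k v = (\<lambda>ys. \<alpha>' k v ys - \<alpha> k v ys))"
    if h: "h \<in> degm1_gens sg sv Vc" for h
  proof -
    have "ext0 \<alpha>' n f xs - ext0 \<alpha> n f xs = ce_diff br br (ext1 h n f) xs + ext1 h (n + 1) (dtot br actV dV n f) xs
      \<longleftrightarrow> (\<Sum>q\<in>{0..n}. isgn 0 (shuffle_ext (nat (n - q)) (nat q) (f q) (?D h q) xs)) = 0"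
      if "f \<in> omega sg sv Vc n" for n f xs
      unfolding ce_diff_ext1_plus_ext1_dtot[OF h that] ext0_diff isgn_0 shuffle_ext_diff_right sum_subtractf
      by (simp add: eq_commute[of "sum _ _"])
    then have "(\<forall>n. \<forall>f\<in>omega sg sv Vc n. \<forall>xs. ext0 \<alpha>' n f xs - ext0 \<alpha> n f xs
        = ce_diff br br (ext1 h n f) xs + ext1 h (n + 1) (dtot br actV dV n f) xs)
      \<longleftrightarrow> (\<forall>n. \<forall>f\<in>omega sg sv Vc n. \<forall>xs.
          (\<Sum>q\<in>{0..n}. isgn 0 (shuffle_ext (nat (n - q)) (nat q) (f q) (?D h q) xs)) = 0)"
      by (simp only: cong: ball_cong)
    also have "\<dots> \<longleftrightarrow> (\<forall>k\<ge>0. \<forall>v\<in>Vc k. ?D h k v = (\<lambda>_. 0))"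
      using homotopy_bracket_at_zero[OF h] deg0_gens_at_zero[OF \<alpha>] deg0_gens_at_zero[OF \<alpha>']
        homogeneous_homotopy_bracket[OF h] form_map_homogeneous[OF deg0_gens_form_map[OF \<alpha>]]
        form_map_homogeneous[OF deg0_gens_form_map[OF \<alpha>']]
      by (intro shuffle_sums_vanish_iff[where m = nat]) (simp_all add: homogeneous_def)
    finally show ?thesis by (simp add: fun_eq_iff)
  qed
  then show ?thesis unfolding LP_homotopic_def by (simp only: cong: bex_cong)
qed

lemma coboundary_iff:
  assumes \<alpha>: "\<alpha> \<in> deg0_gens sg sv Vc" and \<alpha>': "\<alpha>' \<in> deg0_gens sg sv Vc"
  shows "(\<lambda>q xs v. cmap \<alpha>' q xs v - cmap \<alpha> q xs v) \<in> coboundaries0 sg br sv Vc actV dV \<longleftrightarrow>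
    (\<exists>h\<in>degm1_gens sg sv Vc. \<forall>k\<ge>0. \<forall>v\<in>Vc k. homotopy_bracket h k v = (\<lambda>ys. \<alpha>' k v ys - \<alpha> k v ys))"
    (is "?c \<in> _ \<longleftrightarrow> ?rhs")
proof -
  have "?c \<in> coboundaries0 sg br sv Vc actV dV \<longleftrightarrow>
      (\<exists>h\<in>degm1_gens sg sv Vc. ?c = dtot br (Hom_act br Vc actV) (Hom_d Vc dV) (-1) (hom_cochain h))"
  proof
    assume "?c \<in> coboundaries0 sg br sv Vc actV dV"
    then obtain b where b: "b \<in> omega sg (Hom_scale sg) (Hom_c sg sv Vc) (-1)"
      and c: "?c = dtot br (Hom_act br Vc actV) (Hom_d Vc dV) (-1) b"
      unfolding coboundaries0_def by blast
    have "hom_cochain (\<lambda>k v xs. b (- k) xs v) = b" by (rule hom_cochain_inverse)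
    then show "\<exists>h\<in>degm1_gens sg sv Vc. ?c = dtot br (Hom_act br Vc actV) (Hom_d Vc dV) (-1) (hom_cochain h)"
      using b c degm1_gens_iff_omega by metis
  qed (auto simp: coboundaries0_def degm1_gens_iff_omega)
  also have "\<dots> \<longleftrightarrow> ?rhs"
  proof (intro bex_cong refl)
    fix h assume h: "h \<in> degm1_gens sg sv Vc"
    have "dtot br (Hom_act br Vc actV) (Hom_d Vc dV) (-1) (hom_cochain h) q xs v
        = (if q \<le> 0 \<and> v \<in> Vc (- q) then homotopy_bracket h (- q) v xs else 0)" for q xs v
      using dtot_hom_cochain[OF allI[OF degm1_gens_form_map[OF h]]]
      by (simp add: homotopy_bracket_def add.commute)
    moreover have "?c q xs v = (if q \<le> 0 \<and> v \<in> Vc (- q) then \<alpha>' (- q) v xs - \<alpha> (- q) v xs else 0)" for q xs v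
      using \<alpha> \<alpha>' by (auto simp: cmap_def deg0_gens_def)
    ultimately have "?c = dtot br (Hom_act br Vc actV) (Hom_d Vc dV) (-1) (hom_cochain h) \<longleftrightarrow>
        (\<forall>q xs v. q \<le> 0 \<and> v \<in> Vc (- q) \<longrightarrow> homotopy_bracket h (- q) v xs = \<alpha>' (- q) v xs - \<alpha> (- q) v xs)"
      by (auto simp: fun_eq_iff)
    also have "\<dots> \<longleftrightarrow> (\<forall>k\<ge>0. \<forall>v\<in>Vc k. homotopy_bracket h k v = (\<lambda>ys. \<alpha>' k v ys - \<alpha> k v ys))"
    proof (intro iffI allI impI ballI ext)
      fix k v xs
      assume "\<forall>q xs v. q \<le> 0 \<and> v \<in> Vc (- q) \<longrightarrow> homotopy_bracket h (- q) v xs = \<alpha>' (- q) v xs - \<alpha> (- q) v xs"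
        "0 \<le> k" "v \<in> Vc k"
      then show "homotopy_bracket h k v xs = \<alpha>' k v xs - \<alpha> k v xs" by (metis minus_minus neg_le_0_iff_le)
    qed (simp add: fun_eq_iff)
    finally show "?c = dtot br (Hom_act br Vc actV) (Hom_d Vc dV) (-1) (hom_cochain h) \<longleftrightarrow>
        (\<forall>k\<ge>0. \<forall>v\<in>Vc k. homotopy_bracket h k v = (\<lambda>ys. \<alpha>' k v ys - \<alpha> k v ys))" .
  qed
  finally show ?thesis .
qed

lemma cmap_bij_betw_cocycles:
  "bij_betw cmap (LP_structures sg br sv Vc actV dV) (cocycles0 sg br sv Vc actV dV)"
proof (rule bij_betw_imageI)
  show "inj_on cmap (LP_structures sg br sv Vc actV dV)"
  proof (rule inj_onI)
    fix \<alpha> \<beta>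
    assume "\<alpha> \<in> LP_structures sg br sv Vc actV dV" "\<beta> \<in> LP_structures sg br sv Vc actV dV" "cmap \<alpha> = cmap \<beta>"
    then have "hom_cochain \<alpha> = hom_cochain \<beta>" by (simp add: LP_structures_iff cmap_eq_hom_cochain)
    then show "\<alpha> = \<beta>" by (rule injD[OF inj_hom_cochain])
  qed
  show "cmap ` LP_structures sg br sv Vc actV dV = cocycles0 sg br sv Vc actV dV"
  proof
    show "cmap ` LP_structures sg br sv Vc actV dV \<subseteq> cocycles0 sg br sv Vc actV dV"
      using LP_structures_iff cmap_cocycle_iff by blast
  next
    show "cocycles0 sg br sv Vc actV dV \<subseteq> cmap ` LP_structures sg br sv Vc actV dV"
    proof
      fix c assume c: "c \<in> cocycles0 sg br sv Vc actV dV"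
      define \<alpha> where "\<alpha> = (\<lambda>k v xs. c (- k) xs v)"
      have hom_\<alpha>: "hom_cochain \<alpha> = c" unfolding \<alpha>_def by (rule hom_cochain_inverse)
      then have \<alpha>: "\<alpha> \<in> deg0_gens sg sv Vc" using c deg0_gens_iff_omega by (simp add: cocycles0_def)
      then have "cmap \<alpha> = c" using cmap_eq_hom_cochain hom_\<alpha> by simp
      moreover have "\<alpha> \<in> LP_structures sg br sv Vc actV dV"
        using c calculation cmap_cocycle_iff[OF \<alpha>] LP_structures_iff \<alpha> by simp
      ultimately show "c \<in> cmap ` LP_structures sg br sv Vc actV dV" by blast
    qed
  qed
qed

lemma LP_homotopic_iff_coboundary:
  assumes "\<alpha> \<in> LP_structures sg br sv Vc actV dV" "\<alpha>' \<in> LP_structures sg br sv Vc actV dV"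
  shows "LP_homotopic sg br sv Vc actV dV \<alpha> \<alpha>' \<longleftrightarrow>
    (\<lambda>q xs v. cmap \<alpha>' q xs v - cmap \<alpha> q xs v) \<in> coboundaries0 sg br sv Vc actV dV"
  using assms LP_homotopic_iff coboundary_iff LP_structures_iff by simp

end

theorem proposition1p18:
  fixes sg :: "'k::field_char_0 \<Rightarrow> 'g::ab_group_add \<Rightarrow> 'g"
    and br :: "'g \<Rightarrow> 'g \<Rightarrow> 'g"
    and sv :: "'k \<Rightarrow> 'v::ab_group_add \<Rightarrow> 'v"
    and Vc :: "int \<Rightarrow> 'v set"
    and actV :: "int \<Rightarrow> 'g \<Rightarrow> 'v \<Rightarrow> 'v"
    and dV :: "int \<Rightarrow> 'v \<Rightarrow> 'v"
  assumes "lie_algebra sg br" and "finite_dim sg"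
    and "dg_module sg br sv Vc actV dV" and "nonneg Vc"
  shows "bij_betw cmap (LP_structures sg br sv Vc actV dV) (cocycles0 sg br sv Vc actV dV)
    \<and> (\<forall>\<alpha>\<in>LP_structures sg br sv Vc actV dV. \<forall>\<alpha>'\<in>LP_structures sg br sv Vc actV dV.
         LP_homotopic sg br sv Vc actV dV \<alpha> \<alpha>' \<longleftrightarrow>
         (\<lambda>q xs v. cmap \<alpha>' q xs v - cmap \<alpha> q xs v) \<in> coboundaries0 sg br sv Vc actV dV)"
proof -
  interpret nonneg_dg_module sg br sv Vc actV dV
    using assms(1,3,4) by unfold_locales
  show ?thesis
    using cmap_bij_betw_cocycles LP_homotopic_iff_coboundary by blast
qed

end
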